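(* Let $(\mathcal C,\Delta,\delta,\beta,* )$ be a braided $*$-coalgebra and let $K,L:\mathcal C\otimes\mathcal C\to\mathbb C$ be hermitian linear functionals. If $K$ is $\beta$-invariant or $L$ is $\beta^{-1}$-invariant, then the convolution $K\star L=(K\otimes L)\circ\Lambda$ is hermitian as well.
   Context: A braided vector space is a pair $(V,\beta)$, $V$ a complex vector space, $\beta\in\mathrm{Aut}(V\otimes V)$ with $(\beta\otimes\mathrm{id})(\mathrm{id}\otimes\beta)(\beta\otimes\mathrm{id})=(\mathrm{id}\otimes\beta)(\beta\otimes\mathrm{id})(\mathrm{id}\otimes\beta)$ ($\beta^2=\mathrm{id}$ is not assumed). Define $\beta_{m,n}:V^{\otimes m}\otimes V^{\otimes n}\to V^{\otimes n}\otimes V^{\otimes m}$ by $\beta_{0,0}=\mathrm{id}_{\mathbb C}$, $\beta_{1,0}=\beta_{0,1}=\mathrm{id}_V$, $\beta_{1,m+1}=(\mathrm{id}_V\otimes\beta_{1,m})(\beta\otimes\mathrm{id}_{V^{\otimes m}})$, $\beta_{n+1,m}=(\beta_{n,m}\otimes\mathrm{id}_V)(\mathrm{id}_{V^{\otimes n}}\otimes\beta_{1,m})$ (with $V^{\otimes0}=\mathbb C$ identified away in tensor products). A linear map $f:V^{\otimes m}\to V^{\otimes n}$ is $\beta$-invariant if $(f\otimes\mathrm{id})\circ\beta_{1,m}=\beta_{1,n}\circ(\mathrm{id}\otimes f)$, $\beta^{-1}$-invariant if $(\mathrm{id}\otimes f)\circ\beta_{m,1}=\beta_{n,1}\circ(f\otimes\mathrm{id})$,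 and $\beta$-compatible if both hold. In particular a functional $K$ on $V\otimes V$ is $\beta$-invariant iff $(K\otimes\mathrm{id})\circ\beta_{1,2}=\mathrm{id}\otimes K$ and $\beta^{-1}$-invariant iff $(\mathrm{id}\otimes K)\circ\beta_{2,1}=K\otimes\mathrm{id}$ on $V^{\otimes 3}$. A braided coalgebra $(\mathcal C,\Delta,\delta,\beta)$ is a coassociative counital coalgebra with a braiding $\beta$ on $\mathcal C$ such that $\Delta$ and $\delta$ are $\beta$-compatible. Set $\Lambda:=(\mathrm{id}\otimes\beta\otimes\mathrm{id})\circ(\Delta\otimes\Delta)$, the comultiplication of $\mathcal C\otimes\mathcal C$ (with counit $\delta\otimes\delta$). A braided $*$-coalgebra is a braided coalgebra with an antilinear involution $*$ on $\mathcal C$ such that $\Delta\circ *=\beta\circ( *\otimes* )\circ\tau\circ\Delta$, $\delta(c^* )=\overline{\delta(c)}$, and $\beta\circ( *\otimes* )\circ\tau=( *\otimes* )\circ\tau\circ\beta^{-1}$, where $\tau(a\otimes b)=b\otimes a$ is the flip. A linear functional $K$ on $\mathcal C\otimes\mathcal C$ is hermitian if $K(a^*\otimes b^* )=\overline{K(b\otimes a)}$ for all $a,b\in\mathcal C$. *)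

theory Defs
  imports Complex_Main "HOL-Library.Quotient_List"
begin

text \<open>
Complex vector spaces (there is no complex_vector class in the distribution, so we
introduce one), the tensor algebra T(V) over a complex vector space V (realised as
formal linear combinations of words v1 v2 ... vn, identified when all multilinear
scalar forms agree on them, i.e. T(V) embedded in the algebraic dual of the space of
multilinear forms), its graded pieces Tn n = V^(tensor n), tensor products of linear
maps between graded pieces, and the braided *-coalgebra notions of the paper.
Tn 0 is identified with the scalars via tw [] (the unit of T(V)).
\<close>


class scaleC = fixes scaleC :: "complex \<Rightarrow> 'a \<Rightarrow> 'a" (infixr "*\<^sub>C" 75)

class complex_vector = scaleC + ab_group_add +
  assumes scaleC_add_right: "a *\<^sub>C (x + y) = a *\<^sub>C x + a *\<^sub>C y"
    and scaleC_add_left: "(a + b) *\<^sub>C x = a *\<^sub>C x + b *\<^sub>C x"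
    and scaleC_scaleC: "a *\<^sub>C (b *\<^sub>C x) = (a * b) *\<^sub>C x"
    and scaleC_one: "1 *\<^sub>C x = x"

definition mlin :: "('v::complex_vector list \<Rightarrow> complex) \<Rightarrow> bool" where
  "mlin \<phi> \<longleftrightarrow> (\<forall>us ws a x y. \<phi> (us @ (a *\<^sub>C x + y) # ws) = a * \<phi> (us @ x # ws) + \<phi> (us @ y # ws))"

definition tsum :: "('v list \<Rightarrow> complex) \<Rightarrow> (complex \<times> 'v list) list \<Rightarrow> complex" where
  "tsum \<phi> xs = sum_list (map (\<lambda>(c, w). c * \<phi> w) xs)"

definition teq :: "(complex \<times> 'v::complex_vector list) list \<Rightarrow> (complex \<times> 'v list) list \<Rightarrow> bool" where
  "teq xs ys \<longleftrightarrow> (\<forall>\<phi>. mlin \<phi> \<longrightarrow> tsum \<phi> xs = tsum \<phi> ys)"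

quotient_type (overloaded) 'v tens = "(complex \<times> 'v::complex_vector list) list" / teq
  by (auto intro!: equivpI reflpI sympI transpI simp: teq_def)

definition sc_list :: "complex \<Rightarrow> (complex \<times> 'v list) list \<Rightarrow> (complex \<times> 'v list) list" where
  "sc_list a xs = map (\<lambda>(c, w). (a * c, w)) xs"

lemma tsum_append[simp]: "tsum \<phi> (xs @ ys) = tsum \<phi> xs + tsum \<phi> ys"
  by (simp add: tsum_def)
lemma tsum_sc[simp]: "tsum \<phi> (sc_list a xs) = a * tsum \<phi> xs"
  by (induct xs) (auto simp: tsum_def sc_list_def algebra_simps)
lemma tsum_Nil[simp]: "tsum \<phi> [] = 0" by (simp add: tsum_def)

instantiation tens :: (complex_vector) complex_vector
begin
lift_definition zero_tens :: "'a tens" is "[]" .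
lift_definition plus_tens :: "'a tens \<Rightarrow> 'a tens \<Rightarrow> 'a tens" is "(@)"
  by (simp add: teq_def)
lift_definition scaleC_tens :: "complex \<Rightarrow> 'a tens \<Rightarrow> 'a tens" is sc_list
  by (simp add: teq_def)
lift_definition uminus_tens :: "'a tens \<Rightarrow> 'a tens" is "sc_list (-1)"
  by (simp add: teq_def)
lift_definition minus_tens :: "'a tens \<Rightarrow> 'a tens \<Rightarrow> 'a tens" is "\<lambda>xs ys. xs @ sc_list (-1) ys"
  by (simp add: teq_def)
instance
proof
  fix a b c :: "'a tens" and r s :: complex
  show "a + b + c = a + (b + c)" by transfer (simp add: teq_def)
  show "a + b = b + a" by transfer (simp add: teq_def)
  show "0 + a = a" by transfer (simp add: teq_def)
  show "- a + a = 0" by transfer (simp add: teq_def)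
  show "a - b = a + - b" by transfer (simp add: teq_def)
  show "r *\<^sub>C (a + b) = r *\<^sub>C a + r *\<^sub>C b" by transfer (simp add: teq_def sc_list_def)
  show "(r + s) *\<^sub>C a = r *\<^sub>C a + s *\<^sub>C a" by transfer (simp add: teq_def algebra_simps)
  show "r *\<^sub>C (s *\<^sub>C a) = (r * s) *\<^sub>C a" by transfer (simp add: teq_def)
  show "1 *\<^sub>C a = a" by transfer (simp add: teq_def)
qed
end

instantiation complex :: complex_vector
begin
definition scaleC_complex :: "complex \<Rightarrow> complex \<Rightarrow> complex" where "scaleC_complex = (*)"
instance by standard (auto simp: scaleC_complex_def algebra_simps)
end

definition cat_list :: "(complex \<times> 'v list) list \<Rightarrow> (complex \<times> 'v list) list \<Rightarrow> (complex \<times> 'v list) list" where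
  "cat_list xs ys = concat (map (\<lambda>(c, u). map (\<lambda>(d, w). (c * d, u @ w)) ys) xs)"

lemma tsum_cat_list: "tsum \<phi> (cat_list xs ys) = tsum (\<lambda>u. tsum (\<lambda>w. \<phi> (u @ w)) ys) xs"
proof (induct xs)
  case Nil then show ?case by (simp add: cat_list_def)
next
  case (Cons p xs)
  obtain c u where p: "p = (c, u)" by (cases p)
  have "tsum \<phi> (map (\<lambda>(d, w). (c * d, u @ w)) ys) = c * tsum (\<lambda>w. \<phi> (u @ w)) ys"
    by (induct ys) (auto simp: tsum_def algebra_simps)
  with Cons show ?case by (simp add: cat_list_def p tsum_def)
qed

lemma mlin_tsum: "mlin \<phi> \<Longrightarrow> mlin (\<lambda>u. tsum (\<lambda>w. \<phi> (u @ w)) ys)"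
  unfolding mlin_def
proof (intro allI)
  fix us ws a x y assume m: "\<forall>us ws a x y. \<phi> (us @ (a *\<^sub>C x + y) # ws) = a * \<phi> (us @ x # ws) + \<phi> (us @ y # ws)"
  show "tsum (\<lambda>w. \<phi> ((us @ (a *\<^sub>C x + y) # ws) @ w)) ys = a * tsum (\<lambda>w. \<phi> ((us @ x # ws) @ w)) ys + tsum (\<lambda>w. \<phi> ((us @ y # ws) @ w)) ys"
    using m by (induct ys) (auto simp: tsum_def algebra_simps)
qed

lemma mlin_app: "mlin \<phi> \<Longrightarrow> mlin (\<lambda>w. \<phi> (u @ w))"
  unfolding mlin_def by (metis append.assoc)

lemma tsum_cong_inner: "(\<And>u. f u = g u) \<Longrightarrow> tsum f xs = tsum g xs"
  by (metis ext)

lift_definition tmul :: "'v::complex_vector tens \<Rightarrow> 'v tens \<Rightarrow> 'v tens" is cat_list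
proof -
  fix xs xs' ys ys' :: "(complex \<times> 'v list) list"
  assume 1: "teq xs xs'" and 2: "teq ys ys'"
  show "teq (cat_list xs ys) (cat_list xs' ys')"
    unfolding teq_def
  proof (intro allI impI)
    fix \<phi> :: "'v list \<Rightarrow> complex" assume m: "mlin \<phi>"
    have "tsum \<phi> (cat_list xs ys) = tsum (\<lambda>u. tsum (\<lambda>w. \<phi> (u @ w)) ys) xs" by (rule tsum_cat_list)
    also have "\<dots> = tsum (\<lambda>u. tsum (\<lambda>w. \<phi> (u @ w)) ys) xs'"
      using 1 mlin_tsum[OF m] unfolding teq_def by blast
    also have "\<dots> = tsum (\<lambda>u. tsum (\<lambda>w. \<phi> (u @ w)) ys') xs'"
      using 2 mlin_app[OF m] unfolding teq_def by (metis (no_types))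
    also have "\<dots> = tsum \<phi> (cat_list xs' ys')" by (rule tsum_cat_list[symmetric])
    finally show "tsum \<phi> (cat_list xs ys) = tsum \<phi> (cat_list xs' ys')" .
  qed
qed


definition tw :: "'v::complex_vector list \<Rightarrow> 'v tens" where
  "tw vs = abs_tens [(1, vs)]"

definition Tn :: "nat \<Rightarrow> 'v::complex_vector tens set" where
  "Tn n = {abs_tens xs | xs. \<forall>p\<in>set xs. length (snd p) = n}"

definition lin_on :: "'a::complex_vector set \<Rightarrow> ('a \<Rightarrow> 'b::complex_vector) \<Rightarrow> bool" where
  "lin_on S f \<longleftrightarrow> (\<forall>x\<in>S. \<forall>y\<in>S. \<forall>a. f (x + y) = f x + f y \<and> f (a *\<^sub>C x) = a *\<^sub>C f x)"

text \<open>Linear extension of a (multilinear) assignment on words of length m+k,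
  split as a word of length m followed by a word of length k.\<close>
definition tlift :: "nat \<Rightarrow> nat \<Rightarrow> ('v list \<Rightarrow> 'v list \<Rightarrow> 'b::complex_vector) \<Rightarrow> 'v::complex_vector tens \<Rightarrow> 'b" where
  "tlift m k h x = sum_list (map (\<lambda>(c, w). if length w = m + k then c *\<^sub>C h (take m w) (drop m w) else 0) (rep_tens x))"

text \<open>f \<otimes> g : V^(m+k) \<rightarrow> V^(p+q) for f : V^m \<rightarrow> V^p, g : V^k \<rightarrow> V^q.\<close>
definition tmap :: "nat \<Rightarrow> nat \<Rightarrow> ('v tens \<Rightarrow> 'v tens) \<Rightarrow> ('v tens \<Rightarrow> 'v tens) \<Rightarrow> 'v::complex_vector tens \<Rightarrow> 'v tens" where
  "tmap m k f g = tlift m k (\<lambda>u w. tmul (f (tw u)) (g (tw w)))"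

text \<open>K \<otimes> L : V^(m+k) \<rightarrow> \<complex> for functionals K on V^m and L on V^k.\<close>
definition ftmap :: "nat \<Rightarrow> nat \<Rightarrow> ('v tens \<Rightarrow> complex) \<Rightarrow> ('v tens \<Rightarrow> complex) \<Rightarrow> 'v::complex_vector tens \<Rightarrow> complex" where
  "ftmap m k K L = tlift m k (\<lambda>u w. K (tw u) * L (tw w))"

text \<open>A functional V^m \<rightarrow> \<complex> viewed as a map V^m \<rightarrow> V^0 (\<complex> = V^0, 1 = tw []).\<close>
definition scal :: "('v tens \<Rightarrow> complex) \<Rightarrow> 'v::complex_vector tens \<Rightarrow> 'v tens" where
  "scal K x = K x *\<^sub>C tw []"

text \<open>(* \<otimes> *) \<circ> \<tau> on V \<otimes> V: a \<otimes> b \<mapsto> b* \<otimes> a* (antilinear).\<close>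
definition sflip :: "('v \<Rightarrow> 'v) \<Rightarrow> 'v::complex_vector tens \<Rightarrow> 'v tens" where
  "sflip st x = sum_list (map (\<lambda>(c, w). if length w = 2 then cnj c *\<^sub>C tw (rev (map st w)) else 0) (rep_tens x))"

fun braid1 :: "('v tens \<Rightarrow> 'v tens) \<Rightarrow> nat \<Rightarrow> 'v::complex_vector tens \<Rightarrow> 'v tens" where
  "braid1 b 0 = id"
| "braid1 b (Suc m) = tmap 1 (Suc m) id (braid1 b m) \<circ> tmap 2 m b id"

fun braid :: "('v tens \<Rightarrow> 'v tens) \<Rightarrow> nat \<Rightarrow> nat \<Rightarrow> 'v::complex_vector tens \<Rightarrow> 'v tens" where
  "braid b 0 m = id"
| "braid b (Suc n) m = tmap (n + m) 1 (braid b n m) id \<circ> tmap n (Suc m) id (braid1 b m)"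

definition braiding :: "('v::complex_vector tens \<Rightarrow> 'v tens) \<Rightarrow> bool" where
  "braiding b \<longleftrightarrow> lin_on (Tn 2) b \<and> bij_betw b (Tn 2) (Tn 2) \<and>
     (\<forall>x\<in>Tn 3. (tmap 2 1 b id \<circ> tmap 1 2 id b \<circ> tmap 2 1 b id) x
              = (tmap 1 2 id b \<circ> tmap 2 1 b id \<circ> tmap 1 2 id b) x)"

definition beta_inv :: "('v::complex_vector tens \<Rightarrow> 'v tens) \<Rightarrow> nat \<Rightarrow> nat \<Rightarrow> ('v tens \<Rightarrow> 'v tens) \<Rightarrow> bool" where
  "beta_inv b m n f \<longleftrightarrow>
     (\<forall>x\<in>Tn (1 + m). tmap m 1 f id (braid1 b m x) = braid1 b n (tmap 1 m id f x))"

definition beta_inv_inv :: "('v tens \<Rightarrow> 'v tens) \<Rightarrow> nat \<Rightarrow> nat \<Rightarrow> ('v::complex_vector tens \<Rightarrow> 'v tens) \<Rightarrow> bool" where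
  "beta_inv_inv b m n f \<longleftrightarrow>
     (\<forall>x\<in>Tn (m + 1). tmap 1 m id f (braid b m 1 x) = braid b n 1 (tmap m 1 f id x))"

definition beta_compatible where
  "beta_compatible b m n f \<longleftrightarrow> beta_inv b m n f \<and> beta_inv_inv b m n f"

text \<open>Comultiplication D : V \<rightarrow> V \<otimes> V and counit e : V \<rightarrow> \<complex>, as maps on T(V) restricted to V = Tn 1.\<close>
definition braided_coalgebra ::
  "('v::complex_vector tens \<Rightarrow> 'v tens) \<Rightarrow> ('v tens \<Rightarrow> complex) \<Rightarrow> ('v tens \<Rightarrow> 'v tens) \<Rightarrow> bool" where
  "braided_coalgebra D e b \<longleftrightarrow> braiding b \<and>
     lin_on (Tn 1) D \<and> D ` Tn 1 \<subseteq> Tn 2 \<and> lin_on (Tn 1) e \<and>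
     (\<forall>x\<in>Tn 1. tmap 1 1 D id (D x) = tmap 1 1 id D (D x)) \<and>
     (\<forall>x\<in>Tn 1. tmap 1 1 (scal e) id (D x) = x \<and> tmap 1 1 id (scal e) (D x) = x) \<and>
     beta_compatible b 1 2 D \<and> beta_compatible b 1 0 (scal e)"

definition braided_star_coalgebra ::
  "('v::complex_vector tens \<Rightarrow> 'v tens) \<Rightarrow> ('v tens \<Rightarrow> complex) \<Rightarrow> ('v tens \<Rightarrow> 'v tens) \<Rightarrow> ('v \<Rightarrow> 'v) \<Rightarrow> bool" where
  "braided_star_coalgebra D e b st \<longleftrightarrow> braided_coalgebra D e b \<and>
     (\<forall>a x y. st (a *\<^sub>C x + y) = cnj a *\<^sub>C st x + st y) \<and> (\<forall>x. st (st x) = x) \<and>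
     (\<forall>c. D (tw [st c]) = b (sflip st (D (tw [c])))) \<and>
     (\<forall>c. e (tw [st c]) = cnj (e (tw [c]))) \<and>
     (\<forall>x\<in>Tn 2. b (sflip st x) = sflip st (inv_into (Tn 2) b x))"

definition hermitian :: "('v \<Rightarrow> 'v) \<Rightarrow> ('v::complex_vector tens \<Rightarrow> complex) \<Rightarrow> bool" where
  "hermitian st K \<longleftrightarrow> (\<forall>a b. K (tw [st a, st b]) = cnj (K (tw [b, a])))"

text \<open>Lambda = (id \<otimes> beta \<otimes> id) \<circ> (D \<otimes> D) : V^2 \<rightarrow> V^4, and convolution K \<star> L = (K \<otimes> L) \<circ> Lambda.\<close>
definition Lam :: "('v tens \<Rightarrow> 'v tens) \<Rightarrow> ('v::complex_vector tens \<Rightarrow> 'v tens) \<Rightarrow> 'v tens \<Rightarrow> 'v tens" where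
  "Lam b D = tmap 1 3 id (tmap 2 1 b id) \<circ> tmap 1 1 D D"

definition conv :: "('v tens \<Rightarrow> 'v tens) \<Rightarrow> ('v::complex_vector tens \<Rightarrow> 'v tens) \<Rightarrow> ('v tens \<Rightarrow> complex) \<Rightarrow> ('v tens \<Rightarrow> complex) \<Rightarrow> 'v tens \<Rightarrow> complex" where
  "conv b D K L = ftmap 2 2 K L \<circ> Lam b D"

end

theory Submission
  imports Defs
begin

text \<open>
  Write \<open>\<sigma>\<^sub>1, \<sigma>\<^sub>2, \<sigma>\<^sub>3\<close> for the braiding acting on the tensor factors 1-2, 2-3
  and 3-4 of \<open>V\<^sup>4\<close>, and \<open>S\<close> for the antilinear star reversal
  \<open>v\<^sub>1 \<dots> v\<^sub>n \<mapsto> v\<^sub>n\<^sup>* \<dots> v\<^sub>1\<^sup>*\<close>.  Then \<open>\<Lambda> = \<sigma>\<^sub>2 \<circ> (\<Delta> \<otimes> \<Delta>)\<close>, and on \<open>V \<otimes> V\<close> the star axioms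
  read \<open>\<Delta>(c\<^sup>*) = \<beta>(S(\<Delta> c))\<close> and \<open>\<beta> \<circ> S \<circ> \<beta> = S\<close>.  With \<open>X = \<Delta> x\<close>, \<open>Y = \<Delta> y\<close>:
    \<open>(K \<star> L)(x\<^sup>* \<otimes> y\<^sup>*) = (K \<otimes> L)(\<sigma>\<^sub>2 \<sigma>\<^sub>1 \<sigma>\<^sub>3 (S(Y \<otimes> X)))\<close>
      \<open>= (K \<otimes> L)(\<sigma>\<^sub>2 \<sigma>\<^sub>1 \<sigma>\<^sub>3 \<sigma>\<^sub>2 (S(\<sigma>\<^sub>2 (Y \<otimes> X))))\<close>     since \<open>\<sigma>\<^sub>2 S \<sigma>\<^sub>2 = S\<close> on \<open>V\<^sup>4\<close>
      \<open>= (L \<otimes> K)(S(\<sigma>\<^sub>2 (Y \<otimes> X)))\<close>                  by the invariance of \<open>K\<close> or of \<open>L\<close>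
      \<open>= conj ((K \<otimes> L)(\<sigma>\<^sub>2 (Y \<otimes> X))) = conj ((K \<star> L)(y \<otimes> x))\<close>   by hermiticity.
\<close>

section \<open>Complex vector spaces\<close>

lemma scaleC_zero_right [simp]: "a *\<^sub>C (0::'a::complex_vector) = 0"
proof -
  have "a *\<^sub>C (0::'a) = a *\<^sub>C (0 + 0)" by simp
  also have "\<dots> = a *\<^sub>C 0 + a *\<^sub>C 0" by (rule scaleC_add_right)
  finally show ?thesis by simp
qed

lemma scaleC_zero_left [simp]: "0 *\<^sub>C (x::'a::complex_vector) = 0"
proof -
  have "0 *\<^sub>C x = (0 + 0) *\<^sub>C x" by simp
  also have "\<dots> = 0 *\<^sub>C x + 0 *\<^sub>C x" by (rule scaleC_add_left)
  finally show ?thesis by simp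
qed

lemma scaleC_sum_list:
  "a *\<^sub>C sum_list (map f xs) = sum_list (map (\<lambda>x. a *\<^sub>C (f x :: 'a::complex_vector)) xs)"
  by (induct xs) (auto simp: scaleC_add_right)

lemma scaleC_complex_mult [simp]: "a *\<^sub>C (z::complex) = a * z"
  by (simp add: scaleC_complex_def)


section \<open>Tensors are determined by their values on multilinear forms\<close>

text \<open>Evaluation of a tensor against a multilinear form \<open>\<phi>\<close> (well defined on the quotient
  precisely when \<open>\<phi>\<close> is multilinear).\<close>
definition ml_eval :: "('v::complex_vector list \<Rightarrow> complex) \<Rightarrow> 'v tens \<Rightarrow> complex" where
  "ml_eval \<phi> x = tsum \<phi> (rep_tens x)"

lemma rep_abs_teq: "teq (rep_tens (abs_tens xs)) xs"
  by (rule Quotient3_rep_abs[OF Quotient3_tens]) (simp add: teq_def)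

lemma ml_eval_abs: "mlin \<phi> \<Longrightarrow> ml_eval \<phi> (abs_tens xs) = tsum \<phi> xs"
  using rep_abs_teq[of xs] unfolding teq_def ml_eval_def by blast

lemma tens_eqI: "(\<And>\<phi>. mlin \<phi> \<Longrightarrow> ml_eval \<phi> x = ml_eval \<phi> y) \<Longrightarrow> x = y"
  using Quotient3_rel_rep[OF Quotient3_tens, of x y] unfolding teq_def ml_eval_def by blast

lemma abs_rep_tens: "abs_tens (rep_tens x) = x"
  by (rule Quotient3_abs_rep[OF Quotient3_tens])

lemma plus_rep: "x + y = abs_tens (rep_tens x @ rep_tens y)"
  by (metis abs_rep_tens plus_tens.abs_eq)

lemma scale_rep: "a *\<^sub>C x = abs_tens (sc_list a (rep_tens x))"
  by (metis abs_rep_tens scaleC_tens.abs_eq)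

lemma tmul_rep: "tmul x y = abs_tens (cat_list (rep_tens x) (rep_tens y))"
  by (metis abs_rep_tens tmul.abs_eq)

lemma ml_eval_plus: "mlin \<phi> \<Longrightarrow> ml_eval \<phi> (x + y) = ml_eval \<phi> x + ml_eval \<phi> y"
  by (simp add: plus_rep ml_eval_abs) (simp add: ml_eval_def)

lemma ml_eval_scale: "mlin \<phi> \<Longrightarrow> ml_eval \<phi> (a *\<^sub>C x) = a * ml_eval \<phi> x"
  by (simp add: scale_rep ml_eval_abs) (simp add: ml_eval_def)

lemma ml_eval_zero: "mlin \<phi> \<Longrightarrow> ml_eval \<phi> 0 = 0"
  by (simp add: zero_tens_def ml_eval_abs)

lemma ml_eval_tw: "mlin \<phi> \<Longrightarrow> ml_eval \<phi> (tw w) = \<phi> w"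
  by (simp add: tw_def ml_eval_abs tsum_def)

lemma ml_eval_tmul:
  "mlin \<phi> \<Longrightarrow> ml_eval \<phi> (tmul x y) = ml_eval (\<lambda>u. ml_eval (\<lambda>w. \<phi> (u @ w)) y) x"
  by (simp add: tmul_rep ml_eval_abs tsum_cat_list) (simp add: ml_eval_def)

lemma mlin_ml_eval_right: "mlin \<phi> \<Longrightarrow> mlin (\<lambda>u. ml_eval (\<lambda>w. \<phi> (u @ w)) y)"
  unfolding ml_eval_def by (rule mlin_tsum)

lemma mlin_app_right: "mlin \<phi> \<Longrightarrow> mlin (\<lambda>u. \<phi> (u @ v))"
  unfolding mlin_def by simp

lemma tsum_fun_add: "tsum (\<lambda>w. f w + g w) xs = tsum f xs + tsum g xs"
  by (induct xs) (auto simp: tsum_def algebra_simps)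

lemma tsum_fun_scale: "tsum (\<lambda>w. a * f w) xs = a * tsum f xs"
  by (induct xs) (auto simp: tsum_def algebra_simps)

lemma ml_eval_fun_add: "ml_eval (\<lambda>w. f w + g w) x = ml_eval f x + ml_eval g x"
  by (simp add: ml_eval_def tsum_fun_add)

lemma ml_eval_fun_scale: "ml_eval (\<lambda>w. a * f w) x = a * ml_eval f x"
  by (simp add: ml_eval_def tsum_fun_scale)

lemma ml_eval_sum_list:
  "mlin \<phi> \<Longrightarrow> ml_eval \<phi> (sum_list (map F xs)) = sum_list (map (\<lambda>x. ml_eval \<phi> (F x)) xs)"
  by (induct xs) (auto simp: ml_eval_plus ml_eval_zero)

lemma tw_multilinear: "tw (us @ (a *\<^sub>C x + y) # ws) = a *\<^sub>C tw (us @ x # ws) + tw (us @ y # ws)"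
  by (rule tens_eqI) (simp add: ml_eval_plus ml_eval_scale ml_eval_tw mlin_def)

lemma tmul_tw: "tmul (tw u) (tw v) = tw (u @ v)"
  by (rule tens_eqI) (simp add: ml_eval_tmul ml_eval_tw mlin_ml_eval_right mlin_app mlin_app_right)

lemma tmul_add_left: "tmul (x + y) z = tmul x z + tmul y z"
  by (rule tens_eqI) (simp add: ml_eval_tmul ml_eval_plus mlin_ml_eval_right)

lemma tmul_scale_left: "tmul (a *\<^sub>C x) z = a *\<^sub>C tmul x z"
  by (rule tens_eqI) (simp add: ml_eval_tmul ml_eval_scale mlin_ml_eval_right)

lemma tmul_add_right: "tmul x (y + z) = tmul x y + tmul x z"
  by (rule tens_eqI) (simp add: ml_eval_tmul ml_eval_plus mlin_app ml_eval_fun_add)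

lemma tmul_scale_right: "tmul x (a *\<^sub>C y) = a *\<^sub>C tmul x y"
  by (rule tens_eqI) (simp add: ml_eval_tmul ml_eval_scale mlin_app ml_eval_fun_scale)

lemma tmul_assoc: "tmul (tmul x y) z = tmul x (tmul y z)"
  by (rule tens_eqI) (simp add: ml_eval_tmul mlin_ml_eval_right mlin_app)

lemma tmul_unit_left [simp]: "tmul (tw []) x = x"
  by (rule tens_eqI) (simp add: ml_eval_tmul ml_eval_tw mlin_ml_eval_right)

lemma tmul_unit_right [simp]: "tmul x (tw []) = x"
  by (rule tens_eqI) (simp add: ml_eval_tmul ml_eval_tw mlin_app)

section \<open>(Semi)linear extension from words\<close>

text \<open>The two scalar twists we need, the identity (linear maps) and complex conjugation
  (antilinear maps): involutive ring endomorphisms of \<open>\<complex>\<close>.\<close>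
definition scalar_twist :: "(complex \<Rightarrow> complex) \<Rightarrow> bool" where
  "scalar_twist \<sigma> \<longleftrightarrow> (\<forall>a b. \<sigma> (a * b) = \<sigma> a * \<sigma> b) \<and> (\<forall>a b. \<sigma> (a + b) = \<sigma> a + \<sigma> b)
     \<and> (\<forall>a. \<sigma> (\<sigma> a) = a) \<and> \<sigma> 1 = 1"

lemma scalar_twist_id: "scalar_twist id"
  by (simp add: scalar_twist_def)

lemma scalar_twist_cnj: "scalar_twist cnj"
  by (simp add: scalar_twist_def)

lemma scalar_twist_zero: "scalar_twist \<sigma> \<Longrightarrow> \<sigma> 0 = 0"
  unfolding scalar_twist_def by (metis add.right_neutral add_cancel_right_right)

lemma scalar_twist_sum_list:
  "scalar_twist \<sigma> \<Longrightarrow> \<sigma> (sum_list (map f xs)) = sum_list (map (\<lambda>x. \<sigma> (f x)) xs)"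
  by (induct xs) (auto simp: scalar_twist_zero, simp add: scalar_twist_def)

definition lin_ext :: "(complex \<Rightarrow> complex) \<Rightarrow> ('v::complex_vector list \<Rightarrow> 'w::complex_vector) \<Rightarrow> 'v tens \<Rightarrow> 'w" where
  "lin_ext \<sigma> H x = sum_list (map (\<lambda>(c, w). \<sigma> c *\<^sub>C H w) (rep_tens x))"

definition respects_teq :: "(complex \<Rightarrow> complex) \<Rightarrow> ('v::complex_vector list \<Rightarrow> 'w::complex_vector) \<Rightarrow> bool" where
  "respects_teq \<sigma> H \<longleftrightarrow> (\<forall>xs ys. teq xs ys \<longrightarrow>
     sum_list (map (\<lambda>(c, w). \<sigma> c *\<^sub>C H w) xs) = sum_list (map (\<lambda>(c, w). \<sigma> c *\<^sub>C H w) ys))"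

definition word_multilinear :: "(complex \<Rightarrow> complex) \<Rightarrow> ('v::complex_vector list \<Rightarrow> 'w::complex_vector) \<Rightarrow> bool" where
  "word_multilinear \<sigma> H \<longleftrightarrow>
     (\<forall>us ws a x y. H (us @ (a *\<^sub>C x + y) # ws) = \<sigma> a *\<^sub>C H (us @ x # ws) + H (us @ y # ws))"

lemma lin_ext_abs:
  "respects_teq \<sigma> H \<Longrightarrow> lin_ext \<sigma> H (abs_tens xs) = sum_list (map (\<lambda>(c, w). \<sigma> c *\<^sub>C H w) xs)"
  unfolding lin_ext_def respects_teq_def using rep_abs_teq by blast

lemma lin_ext_add: "respects_teq \<sigma> H \<Longrightarrow> lin_ext \<sigma> H (x + y) = lin_ext \<sigma> H x + lin_ext \<sigma> H y"
  by (simp add: plus_rep lin_ext_abs) (simp add: lin_ext_def)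

lemma lin_ext_scale:
  assumes "respects_teq \<sigma> H" "scalar_twist \<sigma>"
  shows "lin_ext \<sigma> H (a *\<^sub>C x) = \<sigma> a *\<^sub>C lin_ext \<sigma> H x"
proof -
  have "lin_ext \<sigma> H (a *\<^sub>C x) = sum_list (map (\<lambda>(c, w). \<sigma> c *\<^sub>C H w) (sc_list a (rep_tens x)))"
    by (simp add: scale_rep lin_ext_abs assms)
  also have "\<dots> = sum_list (map (\<lambda>p. \<sigma> a *\<^sub>C (case p of (c, w) \<Rightarrow> \<sigma> c *\<^sub>C H w)) (rep_tens x))"
    unfolding sc_list_def using assms(2)
    by (simp add: comp_def case_prod_unfold scaleC_scaleC scalar_twist_def)
  also have "\<dots> = \<sigma> a *\<^sub>C lin_ext \<sigma> H x"
    by (simp add: lin_ext_def scaleC_sum_list)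
  finally show ?thesis .
qed

lemma lin_ext_tw: "respects_teq \<sigma> H \<Longrightarrow> scalar_twist \<sigma> \<Longrightarrow> lin_ext \<sigma> H (tw w) = H w"
  by (simp add: tw_def lin_ext_abs scalar_twist_def scaleC_one)

lemma lin_ext_lin:
  "respects_teq \<sigma> H \<Longrightarrow> scalar_twist \<sigma> \<Longrightarrow>
   lin_ext \<sigma> H (c *\<^sub>C x + y) = \<sigma> c *\<^sub>C lin_ext \<sigma> H x + lin_ext \<sigma> H y"
  by (simp add: lin_ext_add lin_ext_scale)

text \<open>A \<open>\<sigma>\<close>-multilinear tensor-valued function of words respects the identification:
  test both sides against a multilinear form \<open>\<phi>\<close>, which turns the claim into the
  defining property of \<open>teq\<close> for the multilinear form \<open>\<sigma> \<circ> \<phi> \<circ> H\<close>.\<close>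
lemma respects_teq_tens:
  assumes \<sigma>: "scalar_twist \<sigma>" and H: "word_multilinear \<sigma> (H :: 'v::complex_vector list \<Rightarrow> 'u::complex_vector tens)"
  shows "respects_teq \<sigma> H"
  unfolding respects_teq_def
proof (intro allI impI)
  fix xs ys :: "(complex \<times> 'v list) list" assume t: "teq xs ys"
  show "sum_list (map (\<lambda>(c, w). \<sigma> c *\<^sub>C H w) xs) = sum_list (map (\<lambda>(c, w). \<sigma> c *\<^sub>C H w) ys)"
  proof (rule tens_eqI)
    fix \<phi> :: "'u list \<Rightarrow> complex" assume \<phi>: "mlin \<phi>"
    define \<psi> where "\<psi> w = \<sigma> (ml_eval \<phi> (H w))" for w
    have "mlin \<psi>"
      unfolding mlin_def \<psi>_def
    proof (intro allI)
      fix us ws a x y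
      show "\<sigma> (ml_eval \<phi> (H (us @ (a *\<^sub>C x + y) # ws)))
          = a * \<sigma> (ml_eval \<phi> (H (us @ x # ws))) + \<sigma> (ml_eval \<phi> (H (us @ y # ws)))"
        using H \<phi> \<sigma> unfolding word_multilinear_def scalar_twist_def
        by (simp add: ml_eval_plus ml_eval_scale)
    qed
    moreover have eval: "ml_eval \<phi> (sum_list (map (\<lambda>(c, w). \<sigma> c *\<^sub>C H w) zs)) = \<sigma> (tsum \<psi> zs)" for zs
    proof -
      have "\<sigma> (tsum \<psi> zs) = sum_list (map (\<lambda>p. \<sigma> (case p of (c, w) \<Rightarrow> c * \<psi> w)) zs)"
        unfolding tsum_def by (simp add: scalar_twist_sum_list[OF \<sigma>] comp_def)
      also have "\<dots> = sum_list (map (\<lambda>p. ml_eval \<phi> (case p of (c, w) \<Rightarrow> \<sigma> c *\<^sub>C H w)) zs)"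
        using \<sigma> \<phi> by (intro arg_cong[where f=sum_list] map_cong)
          (auto simp: \<psi>_def scalar_twist_def ml_eval_scale)
      finally show ?thesis by (simp add: ml_eval_sum_list[OF \<phi>])
    qed
    ultimately show "ml_eval \<phi> (sum_list (map (\<lambda>(c, w). \<sigma> c *\<^sub>C H w) xs))
        = ml_eval \<phi> (sum_list (map (\<lambda>(c, w). \<sigma> c *\<^sub>C H w) ys))"
      using t unfolding eval teq_def by simp
  qed
qed

lemma respects_teq_complex:
  assumes H: "word_multilinear id (H :: 'v::complex_vector list \<Rightarrow> complex)"
  shows "respects_teq id H"
proof -
  have "mlin H" using H unfolding word_multilinear_def mlin_def by simp
  then show ?thesis unfolding respects_teq_def teq_def tsum_def by simp
qed

lemma word_multilinear_guard:
  assumes "\<And>us ws a x y. length us + length ws + 1 = n \<Longrightarrow>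
      G (us @ (a *\<^sub>C x + y) # ws) = \<sigma> a *\<^sub>C G (us @ x # ws) + G (us @ y # ws)"
  shows "word_multilinear \<sigma> (\<lambda>w. if length w = n then G w else (0::'w::complex_vector))"
  unfolding word_multilinear_def using assms by auto


section \<open>The graded pieces \<open>V\<^sup>\<otimes>\<^sup>n\<close>\<close>

lemma Tn_tw: "length w = n \<Longrightarrow> tw w \<in> Tn n"
  unfolding tw_def Tn_def by auto

lemma Tn_zero: "0 \<in> Tn n"
  unfolding Tn_def zero_tens_def by auto

lemma Tn_add: "x \<in> Tn n \<Longrightarrow> y \<in> Tn n \<Longrightarrow> x + y \<in> Tn n"
  unfolding Tn_def by (auto simp: plus_tens.abs_eq) (metis Un_iff set_append)

lemma Tn_scale:
  assumes "x \<in> Tn n" shows "c *\<^sub>C x \<in> Tn n"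
proof -
  obtain xs where "x = abs_tens xs" "\<forall>p\<in>set xs. length (snd p) = n"
    using assms unfolding Tn_def by auto
  then show ?thesis unfolding Tn_def
    by (intro CollectI exI[of _ "sc_list c xs"]) (auto simp: scaleC_tens.abs_eq sc_list_def)
qed

lemma Tn_lin: "x \<in> Tn n \<Longrightarrow> y \<in> Tn n \<Longrightarrow> c *\<^sub>C x + y \<in> Tn n"
  by (simp add: Tn_add Tn_scale)

lemma abs_tens_Cons: "abs_tens ((c, w) # xs) = c *\<^sub>C tw w + abs_tens xs"
proof -
  have "abs_tens ((c, w) # xs) = abs_tens (sc_list c [(1, w)] @ xs)" by (simp add: sc_list_def)
  then show ?thesis by (simp add: plus_tens.abs_eq[symmetric] scaleC_tens.abs_eq[symmetric] tw_def)
qed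

lemma Tn_induct [consumes 1, case_names zero tw lin]:
  assumes x: "x \<in> Tn n" and zero: "P 0"
    and tw: "\<And>w. length w = n \<Longrightarrow> P (tw w)"
    and lin: "\<And>c x y. x \<in> Tn n \<Longrightarrow> y \<in> Tn n \<Longrightarrow> P x \<Longrightarrow> P y \<Longrightarrow> P (c *\<^sub>C x + y)"
  shows "P x"
proof -
  obtain xs where xs: "x = abs_tens xs" "\<forall>p\<in>set xs. length (snd p) = n"
    using x unfolding Tn_def by auto
  have "P (abs_tens xs) \<and> abs_tens xs \<in> Tn n" using xs(2)
  proof (induct xs)
    case Nil then show ?case using zero Tn_zero by (simp add: zero_tens_def)
  next
    case (Cons p xs)
    obtain c w where p: "p = (c, w)" by (cases p)
    have "length w = n" using Cons.prems p by auto
    with Cons show ?case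
      by (auto simp: p abs_tens_Cons intro: lin tw Tn_tw Tn_lin)
  qed
  then show ?thesis using xs by simp
qed

definition semilin_on :: "nat \<Rightarrow> (complex \<Rightarrow> complex) \<Rightarrow> ('v::complex_vector tens \<Rightarrow> 'w::complex_vector) \<Rightarrow> bool" where
  "semilin_on n \<sigma> F \<longleftrightarrow> (\<forall>x\<in>Tn n. \<forall>y\<in>Tn n. \<forall>c. F (c *\<^sub>C x + y) = \<sigma> c *\<^sub>C F x + F y)"

lemma semilin_on_zero:
  assumes "scalar_twist \<sigma>" "semilin_on n \<sigma> F" shows "F 0 = 0"
proof -
  have "F (1 *\<^sub>C 0 + 0) = \<sigma> 1 *\<^sub>C F 0 + F 0"
    using assms(2) Tn_zero unfolding semilin_on_def by blast
  then show ?thesis using assms(1) by (simp add: scalar_twist_def scaleC_one)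
qed

lemma Tn_ext:
  assumes \<sigma>: "scalar_twist \<sigma>" and x: "x \<in> Tn n" and F: "semilin_on n \<sigma> F" and G: "semilin_on n \<sigma> G"
    and w: "\<And>w. length w = n \<Longrightarrow> F (tw w) = G (tw w)"
  shows "F x = G x"
  using x
proof (induct rule: Tn_induct)
  case zero then show ?case by (simp add: semilin_on_zero[OF \<sigma> F] semilin_on_zero[OF \<sigma> G])
next
  case (tw w) then show ?case using w by simp
next
  case (lin c x y) then show ?case using F G unfolding semilin_on_def by simp
qed

lemma semilin_lin_ext: "respects_teq \<sigma> H \<Longrightarrow> scalar_twist \<sigma> \<Longrightarrow> semilin_on n \<sigma> (lin_ext \<sigma> H)"
  unfolding semilin_on_def by (simp add: lin_ext_lin)

lemma lin_on_iff_semilin_on: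
  fixes f :: "'v::complex_vector tens \<Rightarrow> 'w::complex_vector"
  shows "lin_on (Tn n) f \<longleftrightarrow> semilin_on n id f"
proof
  assume "lin_on (Tn n) f"
  then show "semilin_on n id f" unfolding semilin_on_def lin_on_def by (simp add: Tn_scale)
next
  assume a: "semilin_on n id f"
  have z: "f 0 = 0" by (rule semilin_on_zero[OF scalar_twist_id a])
  show "lin_on (Tn n) f" unfolding lin_on_def
  proof (intro ballI allI conjI)
    fix x y :: "'v tens" and c assume "x \<in> Tn n" "y \<in> Tn n"
    then show "f (x + y) = f x + f y" using a unfolding semilin_on_def by (metis id_apply scaleC_one)
    show "f (c *\<^sub>C x) = c *\<^sub>C f x"
      using a \<open>x \<in> Tn n\<close> Tn_zero z unfolding semilin_on_def by (metis id_apply add_0_right)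
  qed
qed

lemma lin_on_app: "lin_on (Tn n) f \<Longrightarrow> x \<in> Tn n \<Longrightarrow> y \<in> Tn n \<Longrightarrow> f (a *\<^sub>C x + y) = a *\<^sub>C f x + f y"
  unfolding lin_on_iff_semilin_on semilin_on_def by simp

lemma lin_on_scale: "lin_on (Tn n) f \<Longrightarrow> x \<in> Tn n \<Longrightarrow> f (a *\<^sub>C x) = a *\<^sub>C f x"
  unfolding lin_on_def by blast

lemma lin_on_id: "lin_on S id"
  by (simp add: lin_on_def)

lemma lin_on_cong: "lin_on (Tn n) f \<Longrightarrow> (\<And>x. x \<in> Tn n \<Longrightarrow> f x = g x) \<Longrightarrow> lin_on (Tn n) g"
  unfolding lin_on_def by (simp add: Tn_add Tn_scale)

lemma Tn_image:
  assumes \<sigma>: "scalar_twist \<sigma>" and F: "semilin_on n \<sigma> F" and w: "\<And>w. length w = n \<Longrightarrow> F (tw w) \<in> Tn m" and x: "x \<in> Tn n"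
  shows "F x \<in> Tn m"
  using x
proof (induct rule: Tn_induct)
  case zero then show ?case by (simp add: semilin_on_zero[OF \<sigma> F] Tn_zero)
next
  case (tw w) then show ?case using w by simp
next
  case (lin c x y) then show ?case using F unfolding semilin_on_def by (simp add: Tn_lin)
qed

definition lin_map :: "nat \<Rightarrow> nat \<Rightarrow> ('v::complex_vector tens \<Rightarrow> 'v tens) \<Rightarrow> bool" where
  "lin_map n m f \<longleftrightarrow> lin_on (Tn n) f \<and> f ` Tn n \<subseteq> Tn m"

lemma lin_map_id: "lin_map n n id"
  by (simp add: lin_map_def lin_on_id)

lemma lin_map_comp: "lin_map n m f \<Longrightarrow> lin_map m p g \<Longrightarrow> lin_map n p (g \<circ> f)"
  unfolding lin_map_def lin_on_def by (auto simp: image_subset_iff)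

lemma lin_map_into: "lin_map n m f \<Longrightarrow> x \<in> Tn n \<Longrightarrow> f x \<in> Tn m"
  unfolding lin_map_def by blast

lemma lin_map_lin: "lin_map n m f \<Longrightarrow> lin_on (Tn n) f"
  unfolding lin_map_def by blast

lemma lin_on_comp: "lin_map n m f \<Longrightarrow> lin_on (Tn m) g \<Longrightarrow> lin_on (Tn n) (g \<circ> f)"
  unfolding lin_map_def lin_on_def by (auto simp: image_subset_iff)

lemma tmul_Tn:
  assumes "x \<in> Tn m" "y \<in> Tn k" shows "tmul x y \<in> Tn (m + k)"
proof -
  have left: "semilin_on n id (\<lambda>x. tmul x y)" and right: "semilin_on n id (\<lambda>y. tmul x y)"
    for n and x y :: "'a tens"
    unfolding semilin_on_def by (simp_all add: tmul_add_left tmul_scale_left tmul_add_right tmul_scale_right)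
  have "\<And>u. length u = m \<Longrightarrow> tmul (tw u) y \<in> Tn (m + k)"
    by (rule Tn_image[OF scalar_twist_id right _ assms(2)]) (simp add: tmul_tw Tn_tw)
  then show ?thesis by (rule Tn_image[OF scalar_twist_id left _ assms(1)])
qed


section \<open>Tensor products of maps\<close>

lemma take_drop_split:
  assumes "length us < m"
  shows "take m (us @ z # ws) = us @ z # take (m - length us - 1) ws"
    and "drop m (us @ z # ws) = drop (m - length us - 1) ws"
  using assms by (auto simp: take_Cons' drop_Cons')

lemma take_drop_split2:
  assumes "\<not> length us < m"
  shows "take m (us @ z # ws) = take m us"
    and "drop m (us @ z # ws) = drop m us @ z # ws"
  using assms by auto

definition tmap_word :: "nat \<Rightarrow> nat \<Rightarrow> ('v tens \<Rightarrow> 'v tens) \<Rightarrow> ('v tens \<Rightarrow> 'v tens) \<Rightarrow> 'v::complex_vector list \<Rightarrow> 'v tens" where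
  "tmap_word m k f g = (\<lambda>w. if length w = m + k then tmul (f (tw (take m w))) (g (tw (drop m w))) else 0)"

text \<open>A letter of a word of length \<open>m + k\<close> lies either in the first \<open>m\<close> letters, where \<open>f\<close>
  is linear, or in the last \<open>k\<close>, where \<open>g\<close> is.\<close>
lemma word_multilinear_tmap_word:
  assumes f: "lin_on (Tn m) f" and g: "lin_on (Tn k) g"
  shows "word_multilinear id (tmap_word m k f g)"
  unfolding tmap_word_def
proof (rule word_multilinear_guard)
  fix us ws :: "'a list" and a x y assume len: "length us + length ws + 1 = m + k"
  show "tmul (f (tw (take m (us @ (a *\<^sub>C x + y) # ws)))) (g (tw (drop m (us @ (a *\<^sub>C x + y) # ws)))) =
    id a *\<^sub>C tmul (f (tw (take m (us @ x # ws)))) (g (tw (drop m (us @ x # ws)))) +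
    tmul (f (tw (take m (us @ y # ws)))) (g (tw (drop m (us @ y # ws))))"
  proof (cases "length us < m")
    case True
    have "\<And>z. tw (us @ z # take (m - Suc (length us)) ws) \<in> Tn m" using True len by (intro Tn_tw) auto
    then show ?thesis using True
      by (simp only: take_drop_split[OF True])
        (simp add: tw_multilinear lin_on_app[OF f] tmul_add_left tmul_scale_left)
  next
    case False
    have "\<And>z. tw (drop m us @ z # ws) \<in> Tn k" using False len by (intro Tn_tw) auto
    then show ?thesis using False
      by (simp only: take_drop_split2[OF False])
        (simp add: tw_multilinear lin_on_app[OF g] tmul_add_right tmul_scale_right)
  qed
qed

lemma tmap_eq_lin_ext: "tmap m k f g = lin_ext id (tmap_word m k f g)"
  unfolding tmap_def tlift_def lin_ext_def tmap_word_def
  by (intro ext arg_cong[where f=sum_list] map_cong) auto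

lemma respects_teq_tmap_word: "lin_on (Tn m) f \<Longrightarrow> lin_on (Tn k) g \<Longrightarrow> respects_teq id (tmap_word m k f g)"
  by (rule respects_teq_tens[OF scalar_twist_id word_multilinear_tmap_word])

lemma tmap_tw:
  assumes "lin_on (Tn m) f" "lin_on (Tn k) g" "length w = m + k"
  shows "tmap m k f g (tw w) = tmul (f (tw (take m w))) (g (tw (drop m w)))"
  using assms by (simp add: tmap_eq_lin_ext lin_ext_tw respects_teq_tmap_word scalar_twist_id)
    (simp add: tmap_word_def)

lemma tmap_lin:
  assumes "lin_on (Tn m) f" "lin_on (Tn k) g"
  shows "tmap m k f g (c *\<^sub>C x + y) = c *\<^sub>C tmap m k f g x + tmap m k f g y"
  using lin_ext_lin[OF respects_teq_tmap_word[OF assms] scalar_twist_id] by (simp add: tmap_eq_lin_ext)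

lemma semilin_tmap: "lin_on (Tn m) f \<Longrightarrow> lin_on (Tn k) g \<Longrightarrow> semilin_on n id (tmap m k f g)"
  unfolding semilin_on_def by (simp add: tmap_lin)

lemma lin_on_tmap: "lin_on (Tn m) f \<Longrightarrow> lin_on (Tn k) g \<Longrightarrow> lin_on (Tn n) (tmap m k f g)"
  by (simp add: lin_on_iff_semilin_on semilin_tmap)

lemma tmap_tmul:
  assumes f: "lin_on (Tn m) f" and g: "lin_on (Tn k) g" and x: "x \<in> Tn m" and y: "y \<in> Tn k"
  shows "tmap m k f g (tmul x y) = tmul (f x) (g y)"
proof -
  have on_word: "tmap m k f g (tmul (tw u) y) = tmul (f (tw u)) (g y)" if u: "length u = m" for u
  proof (rule Tn_ext[OF scalar_twist_id y])
    show "semilin_on k id (\<lambda>y. tmap m k f g (tmul (tw u) y))"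
      unfolding semilin_on_def by (simp add: tmul_add_right tmul_scale_right tmap_lin f g)
    show "semilin_on k id (\<lambda>y. tmul (f (tw u)) (g y))"
      unfolding semilin_on_def using g by (simp add: lin_on_app tmul_add_right tmul_scale_right)
  qed (use u in \<open>simp add: tmul_tw tmap_tw f g\<close>)
  show ?thesis
  proof (rule Tn_ext[OF scalar_twist_id x])
    show "semilin_on m id (\<lambda>x. tmap m k f g (tmul x y))"
      unfolding semilin_on_def by (simp add: tmul_add_left tmul_scale_left tmap_lin f g)
    show "semilin_on m id (\<lambda>x. tmul (f x) (g y))"
      unfolding semilin_on_def using f by (simp add: lin_on_app tmul_add_left tmul_scale_left)
  qed (rule on_word)
qed

text \<open>\<open>f \<otimes> g : V\<^sup>\<otimes>\<^sup>m\<^sup>+\<^sup>k \<rightarrow> V\<^sup>\<otimes>\<^sup>p\<^sup>+\<^sup>q\<close>; the degrees are given by equations so that the lemma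
  applies to numerals.\<close>
lemma lin_map_tmap:
  assumes f: "lin_map m p f" and g: "lin_map k q g" and "n = m + k" and "r = p + q"
  shows "lin_map n r (tmap m k f g)"
proof -
  have "tmap m k f g x \<in> Tn (p + q)" if x: "x \<in> Tn (m + k)" for x
  proof (rule Tn_image[OF scalar_twist_id semilin_tmap[OF lin_map_lin[OF f] lin_map_lin[OF g]] _ x])
    fix w :: "'a list" assume w: "length w = m + k"
    have "f (tw (take m w)) \<in> Tn p" "g (tw (drop m w)) \<in> Tn q"
      using w by (simp_all add: lin_map_into[OF f] lin_map_into[OF g] Tn_tw)
    then show "tmap m k f g (tw w) \<in> Tn (p + q)"
      using w by (simp add: tmap_tw lin_map_lin[OF f] lin_map_lin[OF g] tmul_Tn)
  qed
  then show ?thesis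
    using assms lin_on_tmap[OF lin_map_lin[OF f] lin_map_lin[OF g]] by (auto simp: lin_map_def)
qed

lemma tmap_comp:
  assumes f: "lin_on (Tn m') f" and g: "lin_on (Tn k') g"
    and f': "lin_map m m' f'" and g': "lin_map k k' g'" and x: "x \<in> Tn (m + k)"
  shows "tmap m' k' f g (tmap m k f' g' x) = tmap m k (f \<circ> f') (g \<circ> g') x"
proof (rule Tn_ext[OF scalar_twist_id x])
  show "semilin_on (m + k) id (\<lambda>x. tmap m' k' f g (tmap m k f' g' x))"
    unfolding semilin_on_def using f' g' by (simp add: tmap_lin f g lin_map_lin)
  show "semilin_on (m + k) id (tmap m k (f \<circ> f') (g \<circ> g'))"
    by (rule semilin_tmap[OF lin_on_comp[OF f' f] lin_on_comp[OF g' g]])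
  fix w :: "'a list" assume "length w = m + k"
  then show "tmap m' k' f g (tmap m k f' g' (tw w)) = tmap m k (f \<circ> f') (g \<circ> g') (tw w)"
    using f' g' lin_on_comp[OF f' f] lin_on_comp[OF g' g]
    by (simp add: tmap_tw lin_map_lin f g tmap_tmul lin_map_into Tn_tw)
qed

lemma tmap_cong:
  assumes f: "lin_on (Tn m) f" and g: "lin_on (Tn k) g"
    and ef: "\<And>x. x \<in> Tn m \<Longrightarrow> f x = f' x" and eg: "\<And>x. x \<in> Tn k \<Longrightarrow> g x = g' x"
    and x: "x \<in> Tn (m + k)"
  shows "tmap m k f g x = tmap m k f' g' x"
proof -
  have f': "lin_on (Tn m) f'" and g': "lin_on (Tn k) g'"
    using lin_on_cong[OF f ef] lin_on_cong[OF g eg] by auto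
  show ?thesis
    by (rule Tn_ext[OF scalar_twist_id x semilin_tmap[OF f g] semilin_tmap[OF f' g']])
      (simp add: tmap_tw f g f' g' ef eg Tn_tw)
qed

lemma tmap_fuse:
  assumes f: "lin_on (Tn m') f" and g: "lin_on (Tn k') g"
    and f': "lin_map m m' f'" and g': "lin_map k k' g'"
    and hf: "\<And>x. x \<in> Tn m \<Longrightarrow> f (f' x) = h x" and hg: "\<And>x. x \<in> Tn k \<Longrightarrow> g (g' x) = h' x"
    and x: "x \<in> Tn (m + k)"
  shows "tmap m' k' f g (tmap m k f' g' x) = tmap m k h h' x"
proof -
  have "tmap m' k' f g (tmap m k f' g' x) = tmap m k (f \<circ> f') (g \<circ> g') x"
    by (rule tmap_comp[OF f g f' g' x])
  also have "\<dots> = tmap m k h h' x"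
    by (rule tmap_cong[OF lin_on_comp[OF f' f] lin_on_comp[OF g' g] _ _ x]) (simp_all add: hf hg)
  finally show ?thesis .
qed

lemma tmap_id_id:
  assumes y: "y \<in> Tn n" "n = m + k" shows "tmap m k id id y = y"
proof -
  have "tmap m k id id y = id y"
    by (rule Tn_ext[OF scalar_twist_id y(1)[unfolded y(2)] semilin_tmap[OF lin_on_id lin_on_id]])
      (auto simp: semilin_on_def tmap_tw lin_on_id tmul_tw)
  then show ?thesis by simp
qed

lemma tmap_right_unit: assumes f: "lin_on (Tn m) f" and y: "y \<in> Tn m" shows "tmap m 0 f id y = f y"
  by (rule Tn_ext[where \<sigma>=id and F="tmap m 0 f id" and G=f, OF scalar_twist_id y])
    (use f in \<open>auto simp: lin_on_iff_semilin_on[symmetric] tmap_tw lin_on_id lin_on_tmap\<close>)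

lemma tmap_left_unit: assumes g: "lin_on (Tn k) g" and y: "y \<in> Tn k" shows "tmap 0 k id g y = g y"
  by (rule Tn_ext[where \<sigma>=id and F="tmap 0 k id g" and G=g, OF scalar_twist_id y])
    (use g in \<open>auto simp: lin_on_iff_semilin_on[symmetric] tmap_tw lin_on_id lin_on_tmap\<close>)


definition ftmap_word :: "nat \<Rightarrow> nat \<Rightarrow> ('v tens \<Rightarrow> complex) \<Rightarrow> ('v tens \<Rightarrow> complex) \<Rightarrow> 'v::complex_vector list \<Rightarrow> complex" where
  "ftmap_word m k f g = (\<lambda>w. if length w = m + k then f (tw (take m w)) * g (tw (drop m w)) else 0)"

lemma word_multilinear_ftmap_word:
  assumes f: "lin_on (Tn m) f" and g: "lin_on (Tn k) g"
  shows "word_multilinear id (ftmap_word m k f g)"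
  unfolding ftmap_word_def
proof (rule word_multilinear_guard)
  fix us ws :: "'a list" and a x y assume len: "length us + length ws + 1 = m + k"
  show "f (tw (take m (us @ (a *\<^sub>C x + y) # ws))) * g (tw (drop m (us @ (a *\<^sub>C x + y) # ws))) =
    id a *\<^sub>C (f (tw (take m (us @ x # ws))) * g (tw (drop m (us @ x # ws)))) +
    f (tw (take m (us @ y # ws))) * g (tw (drop m (us @ y # ws)))"
  proof (cases "length us < m")
    case True
    have l: "\<And>z. tw (us @ z # take (m - Suc (length us)) ws) \<in> Tn m" using True len by (intro Tn_tw) auto
    show ?thesis using True
      by (simp only: take_drop_split[OF True])
        (simp add: tw_multilinear lin_on_app[OF f] l, simp add: algebra_simps)
  next
    case False
    have l: "\<And>z. tw (drop m us @ z # ws) \<in> Tn k" using False len by (intro Tn_tw) auto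
    show ?thesis using False
      by (simp only: take_drop_split2[OF False])
        (simp add: tw_multilinear lin_on_app[OF g] l, simp add: algebra_simps)
  qed
qed

lemma ftmap_eq_lin_ext: "ftmap m k f g = lin_ext id (ftmap_word m k f g)"
  unfolding ftmap_def tlift_def lin_ext_def ftmap_word_def
  by (intro ext arg_cong[where f=sum_list] map_cong) auto

lemma respects_teq_ftmap_word: "lin_on (Tn m) f \<Longrightarrow> lin_on (Tn k) g \<Longrightarrow> respects_teq id (ftmap_word m k f g)"
  by (rule respects_teq_complex[OF word_multilinear_ftmap_word])

lemma ftmap_tw:
  assumes "lin_on (Tn m) f" "lin_on (Tn k) g" "length w = m + k"
  shows "ftmap m k f g (tw w) = f (tw (take m w)) * g (tw (drop m w))"
  using assms by (simp add: ftmap_eq_lin_ext lin_ext_tw respects_teq_ftmap_word scalar_twist_id)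
    (simp add: ftmap_word_def)

lemma ftmap_lin:
  assumes "lin_on (Tn m) f" "lin_on (Tn k) g"
  shows "ftmap m k f g (c *\<^sub>C x + y) = c * ftmap m k f g x + ftmap m k f g y"
  using lin_ext_lin[OF respects_teq_ftmap_word[OF assms] scalar_twist_id] by (simp add: ftmap_eq_lin_ext)

lemma semilin_ftmap: "lin_on (Tn m) f \<Longrightarrow> lin_on (Tn k) g \<Longrightarrow> semilin_on n id (ftmap m k f g)"
  unfolding semilin_on_def by (simp add: ftmap_lin)

lemma lin_map_scal: "lin_on (Tn m) K \<Longrightarrow> lin_map m 0 (scal K)"
  unfolding lin_map_def lin_on_def scal_def
  by (auto simp: scaleC_add_left scaleC_scaleC intro!: Tn_scale Tn_tw)

section \<open>Star reversal\<close>

definition antilin :: "('v::complex_vector \<Rightarrow> 'v) \<Rightarrow> bool" where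
  "antilin st \<longleftrightarrow> (\<forall>a x y. st (a *\<^sub>C x + y) = cnj a *\<^sub>C st x + st y)"

text \<open>The antilinear map \<open>S : v\<^sub>1 \<dots> v\<^sub>n \<mapsto> v\<^sub>n\<^sup>* \<dots> v\<^sub>1\<^sup>*\<close> on the whole tensor algebra; on
  \<open>V \<otimes> V\<close> it is the map \<open>(* \<otimes> *) \<circ> \<tau>\<close> of the paper.\<close>
definition star_rev :: "('v \<Rightarrow> 'v) \<Rightarrow> 'v::complex_vector tens \<Rightarrow> 'v tens" where
  "star_rev st = lin_ext cnj (\<lambda>w. tw (rev (map st w)))"

lemma word_multilinear_star_rev: "antilin st \<Longrightarrow> word_multilinear cnj (\<lambda>w. tw (rev (map st w)))"
  unfolding word_multilinear_def antilin_def by (simp add: tw_multilinear)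

lemma respects_teq_star_rev: "antilin st \<Longrightarrow> respects_teq cnj (\<lambda>w. tw (rev (map st w)))"
  by (rule respects_teq_tens[OF scalar_twist_cnj word_multilinear_star_rev])

lemma star_rev_tw: "antilin st \<Longrightarrow> star_rev st (tw w) = tw (rev (map st w))"
  by (simp add: star_rev_def lin_ext_tw respects_teq_star_rev scalar_twist_cnj)

lemma star_rev_lin: "antilin st \<Longrightarrow> star_rev st (c *\<^sub>C x + y) = cnj c *\<^sub>C star_rev st x + star_rev st y"
  unfolding star_rev_def by (rule lin_ext_lin[OF respects_teq_star_rev scalar_twist_cnj])

lemma semilin_star_rev: "antilin st \<Longrightarrow> semilin_on n cnj (star_rev st)"
  unfolding semilin_on_def by (simp add: star_rev_lin)

lemma star_rev_Tn: "antilin st \<Longrightarrow> x \<in> Tn n \<Longrightarrow> star_rev st x \<in> Tn n"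
  by (rule Tn_image[OF scalar_twist_cnj semilin_star_rev]) (auto simp: star_rev_tw intro!: Tn_tw)

lemma sflip_eq_star_rev:
  assumes a: "antilin st" and x: "x \<in> Tn 2" shows "sflip st x = star_rev st x"
proof -
  define H where "H w = (if length w = 2 then tw (rev (map st w)) else 0)" for w :: "'a list"
  have "word_multilinear cnj H"
    unfolding H_def by (rule word_multilinear_guard)
      (use word_multilinear_star_rev[OF a] in \<open>simp add: word_multilinear_def\<close>)
  then have H: "respects_teq cnj H" by (rule respects_teq_tens[OF scalar_twist_cnj])
  have e: "sflip st = lin_ext cnj H"
    unfolding sflip_def lin_ext_def H_def by (intro ext arg_cong[where f=sum_list] map_cong) auto
  show ?thesis unfolding e
    by (rule Tn_ext[OF scalar_twist_cnj x semilin_lin_ext[OF H scalar_twist_cnj] semilin_star_rev[OF a]])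
      (simp add: lin_ext_tw[OF H scalar_twist_cnj] star_rev_tw a H_def)
qed

lemma star_rev_tmul:
  assumes a: "antilin st" and x: "x \<in> Tn m" and y: "y \<in> Tn k"
  shows "star_rev st (tmul x y) = tmul (star_rev st y) (star_rev st x)"
proof -
  have on_word: "star_rev st (tmul (tw u) y) = tmul (star_rev st y) (star_rev st (tw u))" for u
    by (rule Tn_ext[OF scalar_twist_cnj y])
      (auto simp: semilin_on_def tmul_add_right tmul_scale_right tmul_add_left tmul_scale_left
        star_rev_lin a star_rev_tw tmul_tw)
  show ?thesis
    by (rule Tn_ext[OF scalar_twist_cnj x])
      (auto simp: semilin_on_def tmul_add_right tmul_scale_right tmul_add_left tmul_scale_left
        star_rev_lin a on_word)
qed


section \<open>Maps acting on some of the tensor factors\<close>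

text \<open>For \<open>f = \<beta>\<close> these are the braid generators; for \<open>f = scal K\<close> they contract two factors.\<close>
abbreviation on12 :: "('v::complex_vector tens \<Rightarrow> 'v tens) \<Rightarrow> 'v tens \<Rightarrow> 'v tens" where
  "on12 f \<equiv> tmap 2 1 f id"
abbreviation on23 :: "('v::complex_vector tens \<Rightarrow> 'v tens) \<Rightarrow> 'v tens \<Rightarrow> 'v tens" where
  "on23 f \<equiv> tmap 1 2 id f"
abbreviation on12_4 :: "('v::complex_vector tens \<Rightarrow> 'v tens) \<Rightarrow> 'v tens \<Rightarrow> 'v tens" where
  "on12_4 f \<equiv> tmap 2 2 f id"
abbreviation on23_4 :: "('v::complex_vector tens \<Rightarrow> 'v tens) \<Rightarrow> 'v tens \<Rightarrow> 'v tens" where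
  "on23_4 f \<equiv> tmap 1 3 id (on12 f)"
abbreviation on34_4 :: "('v::complex_vector tens \<Rightarrow> 'v tens) \<Rightarrow> 'v tens \<Rightarrow> 'v tens" where
  "on34_4 f \<equiv> tmap 2 2 id f"

lemma length_4_cases: "length w = 4 \<Longrightarrow> \<exists>a b c d. w = [a, b, c, d]"
  by (auto simp: numeral_eq_Suc length_Suc_conv)

lemma on12_lin_map: "lin_map 2 p f \<Longrightarrow> q = p + 1 \<Longrightarrow> lin_map 3 q (on12 f)"
  by (rule lin_map_tmap[OF _ lin_map_id]) simp_all

lemma on23_lin_map: "lin_map 2 p f \<Longrightarrow> q = p + 1 \<Longrightarrow> lin_map 3 q (on23 f)"
  by (rule lin_map_tmap[OF lin_map_id]) simp_all

lemma first3_lin_map: "lin_map 3 p f \<Longrightarrow> q = p + 1 \<Longrightarrow> lin_map 4 q (tmap 3 1 f id)"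
  by (rule lin_map_tmap[OF _ lin_map_id]) simp_all

lemma last3_lin_map: "lin_map 3 p f \<Longrightarrow> q = p + 1 \<Longrightarrow> lin_map 4 q (tmap 1 3 id f)"
  by (rule lin_map_tmap[OF lin_map_id]) simp_all

lemma on12_4_regroup:
  assumes f: "lin_on (Tn 2) f" and y: "y \<in> Tn 4"
  shows "on12_4 f y = tmap 3 1 (on12 f) id y"
proof (rule Tn_ext[OF scalar_twist_id y])
  show "semilin_on 4 id (on12_4 f)" by (rule semilin_tmap[OF f lin_on_id])
  show "semilin_on 4 id (tmap 3 1 (on12 f) id)" by (rule semilin_tmap[OF lin_on_tmap[OF f lin_on_id] lin_on_id])
  fix w :: "'a list" assume "length w = 4"
  then obtain a b c d where w: "w = [a, b, c, d]" using length_4_cases by blast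
  show "on12_4 f (tw w) = tmap 3 1 (on12 f) id (tw w)"
    by (simp add: w tmap_tw f lin_on_id lin_on_tmap tmul_assoc tmul_tw)
qed

lemma on34_4_regroup:
  assumes g: "lin_on (Tn 2) g" and y: "y \<in> Tn 4"
  shows "on34_4 g y = tmap 1 3 id (on23 g) y"
proof (rule Tn_ext[OF scalar_twist_id y])
  show "semilin_on 4 id (on34_4 g)" by (rule semilin_tmap[OF lin_on_id g])
  show "semilin_on 4 id (tmap 1 3 id (on23 g))" by (rule semilin_tmap[OF lin_on_id lin_on_tmap[OF lin_on_id g]])
  fix w :: "'a list" assume "length w = 4"
  then obtain a b c d where w: "w = [a, b, c, d]" using length_4_cases by blast
  show "on34_4 g (tw w) = tmap 1 3 id (on23 g) (tw w)"
    by (simp add: w tmap_tw g lin_on_id lin_on_tmap tmul_assoc[symmetric] tmul_tw)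
qed

lemma on23_4_regroup:
  assumes g: "lin_on (Tn 2) g" and y: "y \<in> Tn 4"
  shows "on23_4 g y = tmap 3 1 (on23 g) id y"
proof (rule Tn_ext[OF scalar_twist_id y])
  show "semilin_on 4 id (on23_4 g)" by (rule semilin_tmap[OF lin_on_id lin_on_tmap[OF g lin_on_id]])
  show "semilin_on 4 id (tmap 3 1 (on23 g) id)" by (rule semilin_tmap[OF lin_on_tmap[OF lin_on_id g] lin_on_id])
  fix w :: "'a list" assume "length w = 4"
  then obtain a b c d where w: "w = [a, b, c, d]" using length_4_cases by blast
  show "on23_4 g (tw w) = tmap 3 1 (on23 g) id (tw w)"
    by (simp add: w tmap_tw g lin_on_id lin_on_tmap tmul_assoc)
qed

lemma ftmap_contract_first:
  assumes K: "lin_on (Tn 2) K" and L: "lin_on (Tn 2) L" and y: "y \<in> Tn 4"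
  shows "ftmap 2 2 K L y = L (tmap 3 1 (on12 (scal K)) id y)"
proof (rule Tn_ext[OF scalar_twist_id y semilin_ftmap[OF K L]])
  have C: "lin_map 4 2 (tmap 3 1 (on12 (scal K)) id)"
    by (rule first3_lin_map[OF on12_lin_map[OF lin_map_scal[OF K]]]) simp_all
  then show "semilin_on 4 id (\<lambda>y. L (tmap 3 1 (on12 (scal K)) id y))"
    unfolding semilin_on_def lin_map_def
    by (auto simp: lin_on_app[OF L] lin_on_app image_subset_iff)
  fix w :: "'a list" assume "length w = 4"
  then obtain a1 a2 a3 a4 where w: "w = [a1, a2, a3, a4]" using length_4_cases by blast
  show "ftmap 2 2 K L (tw w) = L (tmap 3 1 (on12 (scal K)) id (tw w))"
    by (simp add: w ftmap_tw K L tmap_tw scal_def lin_map_lin[OF lin_map_scal[OF K]] lin_on_tmap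
        lin_on_id tmul_scale_left tmul_tw lin_on_scale[OF L] Tn_tw)
qed

lemma ftmap_contract_second:
  assumes K: "lin_on (Tn 2) K" and L: "lin_on (Tn 2) L" and y: "y \<in> Tn 4"
  shows "ftmap 2 2 K L y = K (tmap 1 3 id (on23 (scal L)) y)"
proof (rule Tn_ext[OF scalar_twist_id y semilin_ftmap[OF K L]])
  have C: "lin_map 4 2 (tmap 1 3 id (on23 (scal L)))"
    by (rule last3_lin_map[OF on23_lin_map[OF lin_map_scal[OF L]]]) simp_all
  then show "semilin_on 4 id (\<lambda>y. K (tmap 1 3 id (on23 (scal L)) y))"
    unfolding semilin_on_def lin_map_def
    by (auto simp: lin_on_app[OF K] lin_on_app image_subset_iff)
  fix w :: "'a list" assume "length w = 4"
  then obtain a1 a2 a3 a4 where w: "w = [a1, a2, a3, a4]" using length_4_cases by blast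
  show "ftmap 2 2 K L (tw w) = K (tmap 1 3 id (on23 (scal L)) (tw w))"
    by (simp add: w ftmap_tw K L tmap_tw scal_def lin_map_lin[OF lin_map_scal[OF L]] lin_on_tmap
        lin_on_id tmul_scale_right tmul_tw lin_on_scale[OF K] Tn_tw mult.commute)
qed

section \<open>The braidings \<open>\<beta>\<^sub>1\<^sub>,\<^sub>2\<close> and \<open>\<beta>\<^sub>2\<^sub>,\<^sub>1\<close>, and invariance of functionals\<close>

declare braid1.simps [simp del] braid.simps [simp del]

context
  fixes b :: "'v::complex_vector tens \<Rightarrow> 'v tens"
  assumes b: "lin_map 2 2 b"
begin

lemma braid_lin: "lin_on (Tn 2) b"
  by (rule lin_map_lin[OF b])

lemma braid1_1: assumes x: "x \<in> Tn 2" shows "braid1 b 1 x = b x"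
proof -
  have "braid1 b 1 x = tmap 1 1 id id (tmap 2 0 b id x)"
    by (simp add: numeral_eq_Suc braid1.simps)
  also have "\<dots> = tmap 1 1 id id (b x)" by (simp only: tmap_right_unit[OF braid_lin x])
  also have "\<dots> = b x" by (rule tmap_id_id[OF lin_map_into[OF b x]]) simp
  finally show ?thesis .
qed

lemma braid1_1_lin: "lin_on (Tn 2) (braid1 b 1)"
  by (rule lin_on_cong[OF braid_lin]) (erule braid1_1[symmetric])

lemma braid1_2: assumes x: "x \<in> Tn 3" shows "braid1 b 2 x = on23 b (on12 b x)"
proof -
  have "braid1 b 2 x = tmap 1 2 id (braid1 b 1) (on12 b x)"
    by (simp add: numeral_2_eq_2 braid1.simps)
  also have "\<dots> = on23 b (on12 b x)"
  proof (rule tmap_cong[OF lin_on_id braid1_1_lin])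
    show "\<And>y. y \<in> Tn 2 \<Longrightarrow> braid1 b 1 y = b y" by (rule braid1_1)
    show "on12 b x \<in> Tn (1 + 2)" using lin_map_into[OF on12_lin_map[OF b refl] x] by (simp add: numeral_eq_Suc)
  qed simp
  finally show ?thesis .
qed

lemma braid_1_1: assumes y: "y \<in> Tn 2" shows "braid b 1 1 y = b y"
proof -
  have "braid b 1 1 y = tmap 1 1 id id (tmap 0 2 id (braid1 b 1) y)"
    by (simp add: numeral_eq_Suc braid.simps braid1.simps(1))
  also have "\<dots> = tmap 1 1 id id (b y)" by (simp only: tmap_left_unit[OF braid1_1_lin y] braid1_1[OF y])
  also have "\<dots> = b y" by (rule tmap_id_id[OF lin_map_into[OF b y]]) simp
  finally show ?thesis .
qed

lemma braid_2_1: assumes x: "x \<in> Tn 3" shows "braid b 2 1 x = on12 b (on23 b x)"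
proof -
  have "braid b 2 1 x = tmap 2 1 (braid b 1 1) id (tmap 1 2 id (braid1 b 1) x)"
    by (simp add: numeral_2_eq_2 braid.simps)
  also have "tmap 1 2 id (braid1 b 1) x = on23 b x"
  proof (rule tmap_cong[OF lin_on_id braid1_1_lin])
    show "\<And>y. y \<in> Tn 2 \<Longrightarrow> braid1 b 1 y = b y" by (rule braid1_1)
    show "x \<in> Tn (1 + 2)" using x by (simp add: numeral_eq_Suc)
  qed simp
  also have "tmap 2 1 (braid b 1 1) id (on23 b x) = on12 b (on23 b x)"
  proof (rule tmap_cong)
    show "lin_on (Tn 2) (braid b 1 1)" by (rule lin_on_cong[OF braid_lin]) (erule braid_1_1[symmetric])
    show "\<And>y. y \<in> Tn 2 \<Longrightarrow> braid b 1 1 y = b y" by (rule braid_1_1)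
    show "on23 b x \<in> Tn (2 + 1)" using lin_map_into[OF on23_lin_map[OF b refl] x] by simp
  qed (simp_all add: lin_on_id)
  finally show ?thesis .
qed

lemma beta_inv_contraction:
  assumes "beta_inv b 2 0 (scal K)" and x: "x \<in> Tn 3"
  shows "on12 (scal K) (on23 b (on12 b x)) = on23 (scal K) x"
proof -
  have "x \<in> Tn (1 + 2)" using x by (simp add: numeral_eq_Suc)
  then have "on12 (scal K) (braid1 b 2 x) = braid1 b 0 (on23 (scal K) x)"
    using assms(1) unfolding beta_inv_def by blast
  then show ?thesis by (simp only: braid1_2[OF x] braid1.simps(1) id_apply)
qed

lemma beta_inv_inv_contraction:
  assumes "beta_inv_inv b 2 0 (scal L)" and x: "x \<in> Tn 3"
  shows "on23 (scal L) (on12 b (on23 b x)) = on12 (scal L) x"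
proof -
  have "x \<in> Tn (2 + 1)" using x by (simp add: numeral_eq_Suc)
  then have "on23 (scal L) (braid b 2 1 x) = braid b 0 1 (on12 (scal L) x)"
    using assms(1) unfolding beta_inv_inv_def by blast
  then show ?thesis by (simp only: braid_2_1[OF x] braid.simps(1) id_apply)
qed


text \<open>The braid generators \<open>\<sigma>\<^sub>1 = on12_4 b\<close>, \<open>\<sigma>\<^sub>2 = on23_4 b\<close>, \<open>\<sigma>\<^sub>3 = on34_4 b\<close> are linear
  endomorphisms of \<open>V\<^sup>\<otimes>\<^sup>4\<close>, and so are their restrictions to \<open>V\<^sup>\<otimes>\<^sup>3\<close>.\<close>
lemma braid_lin_maps:
  "lin_map 3 3 (on12 b)" "lin_map 3 3 (on23 b)"
  "lin_map 4 4 (on12_4 b)" "lin_map 4 4 (on23_4 b)" "lin_map 4 4 (on34_4 b)"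
  by (rule on12_lin_map[OF b] on23_lin_map[OF b] lin_map_tmap[OF b lin_map_id]
      last3_lin_map[OF on12_lin_map[OF b]] lin_map_tmap[OF lin_map_id b]; simp)+

lemma braid_32: assumes z: "z \<in> Tn 4"
  shows "on34_4 b (on23_4 b z) = tmap 1 3 id (on23 b \<circ> on12 b) z"
proof -
  have "on34_4 b (on23_4 b z) = tmap 1 3 id (on23 b) (tmap 1 3 id (on12 b) z)"
    by (rule on34_4_regroup[OF braid_lin lin_map_into[OF braid_lin_maps(4) z]])
  also have "\<dots> = tmap 1 3 id (on23 b \<circ> on12 b) z"
    by (rule tmap_fuse[OF lin_on_id lin_on_tmap lin_map_id braid_lin_maps(1)])
      (simp_all add: braid_lin lin_on_id z)
  finally show ?thesis .
qed

lemma braid_21: assumes y: "y \<in> Tn 4"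
  shows "on23_4 b (on12_4 b y) = tmap 3 1 (on23 b \<circ> on12 b) id y"
proof -
  have "on23_4 b (on12_4 b y) = tmap 3 1 (on23 b) id (tmap 3 1 (on12 b) id y)"
    using on23_4_regroup[OF braid_lin lin_map_into[OF braid_lin_maps(3) y]] on12_4_regroup[OF braid_lin y]
    by simp
  also have "\<dots> = tmap 3 1 (on23 b \<circ> on12 b) id y"
    by (rule tmap_fuse[OF lin_on_tmap lin_on_id braid_lin_maps(1) lin_map_id])
      (simp_all add: braid_lin lin_on_id y)
  finally show ?thesis .
qed

lemma braid_12: assumes z: "z \<in> Tn 4"
  shows "on12_4 b (on23_4 b z) = tmap 3 1 (on12 b \<circ> on23 b) id z"
proof -
  have "on12_4 b (on23_4 b z) = tmap 3 1 (on12 b) id (tmap 3 1 (on23 b) id z)"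
    using on12_4_regroup[OF braid_lin lin_map_into[OF braid_lin_maps(4) z]] on23_4_regroup[OF braid_lin z]
    by simp
  also have "\<dots> = tmap 3 1 (on12 b \<circ> on23 b) id z"
    by (rule tmap_fuse[OF lin_on_tmap lin_on_id braid_lin_maps(2) lin_map_id])
      (simp_all add: braid_lin lin_on_id z)
  finally show ?thesis .
qed

lemma braid_23: assumes u: "u \<in> Tn 4"
  shows "on23_4 b (on34_4 b u) = tmap 1 3 id (on12 b \<circ> on23 b) u"
proof -
  have "on23_4 b (on34_4 b u) = tmap 1 3 id (on12 b) (tmap 1 3 id (on23 b) u)"
    by (simp only: on34_4_regroup[OF braid_lin u])
  also have "\<dots> = tmap 1 3 id (on12 b \<circ> on23 b) u"
    by (rule tmap_fuse[OF lin_on_id lin_on_tmap lin_map_id braid_lin_maps(2)])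
      (simp_all add: braid_lin lin_on_id u)
  finally show ?thesis .
qed

lemma braid_13: assumes y: "y \<in> Tn 4"
  shows "on12_4 b (on34_4 b y) = on34_4 b (on12_4 b y)"
proof -
  have y': "y \<in> Tn (2 + 2)" using y by simp
  have "on12_4 b (on34_4 b y) = tmap 2 2 (b \<circ> id) (id \<circ> b) y"
    by (rule tmap_comp[OF braid_lin lin_on_id lin_map_id b y'])
  also have "\<dots> = on34_4 b (on12_4 b y)"
    using tmap_comp[OF lin_on_id braid_lin b lin_map_id y'] by simp
  finally show ?thesis .
qed

text \<open>The braid word \<open>\<sigma>\<^sub>2 \<sigma>\<^sub>1 \<sigma>\<^sub>3 \<sigma>\<^sub>2\<close> carries the first two factors of \<open>V\<^sup>\<otimes>\<^sup>4\<close> past the last two.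
  If \<open>K\<close> is \<open>\<beta>\<close>-invariant, \<open>K\<close> contracted on the first two factors can be moved through
  \<open>\<sigma>\<^sub>2 \<sigma>\<^sub>1\<close> (on the first three factors) and then through \<open>\<sigma>\<^sub>3 \<sigma>\<^sub>2\<close> (on the last three).\<close>
lemma braid_swap_of_beta_inv:
  assumes K: "lin_on (Tn 2) K" and L: "lin_on (Tn 2) L"
    and inv: "beta_inv b 2 0 (scal K)" and z: "z \<in> Tn 4"
  shows "ftmap 2 2 K L (on23_4 b (on12_4 b (on34_4 b (on23_4 b z)))) = ftmap 2 2 L K z"
proof -
  let ?s = "on23 b \<circ> on12 b"
  have s: "lin_map 3 3 ?s" by (rule lin_map_comp[OF braid_lin_maps(1,2)])
  have y: "tmap 1 3 id ?s z \<in> Tn 4" by (rule lin_map_into[OF last3_lin_map[OF s] z]) simp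
  have s_y: "tmap 3 1 ?s id (tmap 1 3 id ?s z) \<in> Tn 4" by (rule lin_map_into[OF first3_lin_map[OF s] y]) simp
  have cK: "lin_on (Tn 3) (on12 (scal K))" "lin_on (Tn 3) (on23 (scal K))"
    by (simp_all add: lin_on_tmap lin_map_lin[OF lin_map_scal[OF K]] lin_on_id)
  have moveK: "\<And>x. x \<in> Tn 3 \<Longrightarrow> on12 (scal K) (?s x) = on23 (scal K) x"
    using beta_inv_contraction[OF inv] by simp
  have "ftmap 2 2 K L (on23_4 b (on12_4 b (on34_4 b (on23_4 b z))))
      = ftmap 2 2 K L (tmap 3 1 ?s id (tmap 1 3 id ?s z))"
    by (simp only: braid_32[OF z] braid_21[OF y])
  also have "\<dots> = L (tmap 3 1 (on12 (scal K)) id (tmap 3 1 ?s id (tmap 1 3 id ?s z)))"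
    by (rule ftmap_contract_first[OF K L s_y])
  also have "\<dots> = L (tmap 3 1 (on23 (scal K)) id (tmap 1 3 id ?s z))"
    by (subst tmap_fuse[OF cK(1) lin_on_id s lin_map_id moveK]) (use y in simp_all)
  also have "\<dots> = L (tmap 1 3 id (on12 (scal K)) (tmap 1 3 id ?s z))"
    by (simp only: on23_4_regroup[OF lin_map_lin[OF lin_map_scal[OF K]] y])
  also have "\<dots> = L (tmap 1 3 id (on23 (scal K)) z)"
    by (subst tmap_fuse[OF lin_on_id cK(1) lin_map_id s _ moveK]) (simp_all add: z)
  also have "\<dots> = ftmap 2 2 L K z"
    by (rule ftmap_contract_second[OF L K z, symmetric])
  finally show ?thesis .
qed

text \<open>Symmetrically, if \<open>L\<close> is \<open>\<beta>\<^sup>-\<^sup>1\<close>-invariant, then after rewriting the word as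
  \<open>\<sigma>\<^sub>2 \<sigma>\<^sub>3 \<sigma>\<^sub>1 \<sigma>\<^sub>2\<close>, \<open>L\<close> contracted on the last two factors moves through \<open>\<sigma>\<^sub>2 \<sigma>\<^sub>3\<close> and \<open>\<sigma>\<^sub>1 \<sigma>\<^sub>2\<close>.\<close>
lemma braid_swap_of_beta_inv_inv:
  assumes K: "lin_on (Tn 2) K" and L: "lin_on (Tn 2) L"
    and inv: "beta_inv_inv b 2 0 (scal L)" and z: "z \<in> Tn 4"
  shows "ftmap 2 2 K L (on23_4 b (on12_4 b (on34_4 b (on23_4 b z)))) = ftmap 2 2 L K z"
proof -
  let ?t = "on12 b \<circ> on23 b"
  have t: "lin_map 3 3 ?t" by (rule lin_map_comp[OF braid_lin_maps(2,1)])
  have u: "tmap 3 1 ?t id z \<in> Tn 4" by (rule lin_map_into[OF first3_lin_map[OF t] z]) simp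
  have t_u: "tmap 1 3 id ?t (tmap 3 1 ?t id z) \<in> Tn 4" by (rule lin_map_into[OF last3_lin_map[OF t] u]) simp
  have cL: "lin_on (Tn 3) (on12 (scal L))" "lin_on (Tn 3) (on23 (scal L))"
    by (simp_all add: lin_on_tmap lin_map_lin[OF lin_map_scal[OF L]] lin_on_id)
  have moveL: "\<And>x. x \<in> Tn 3 \<Longrightarrow> on23 (scal L) (?t x) = on12 (scal L) x"
    using beta_inv_inv_contraction[OF inv] by simp
  have "on12_4 b (on34_4 b (on23_4 b z)) = on34_4 b (on12_4 b (on23_4 b z))"
    by (rule braid_13[OF lin_map_into[OF braid_lin_maps(4) z]])
  then have "ftmap 2 2 K L (on23_4 b (on12_4 b (on34_4 b (on23_4 b z))))
      = ftmap 2 2 K L (tmap 1 3 id ?t (tmap 3 1 ?t id z))"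
    by (simp only: braid_12[OF z] braid_23[OF u])
  also have "\<dots> = K (tmap 1 3 id (on23 (scal L)) (tmap 1 3 id ?t (tmap 3 1 ?t id z)))"
    by (rule ftmap_contract_second[OF K L t_u])
  also have "\<dots> = K (tmap 1 3 id (on12 (scal L)) (tmap 3 1 ?t id z))"
    by (subst tmap_fuse[OF lin_on_id cL(2) lin_map_id t _ moveL]) (use u in simp_all)
  also have "\<dots> = K (tmap 3 1 (on23 (scal L)) id (tmap 3 1 ?t id z))"
    by (simp only: on23_4_regroup[OF lin_map_lin[OF lin_map_scal[OF L]] u])
  also have "\<dots> = K (tmap 3 1 (on12 (scal L)) id z)"
    by (subst tmap_fuse[OF cL(2) lin_on_id t lin_map_id moveL]) (simp_all add: z)
  also have "\<dots> = ftmap 2 2 L K z"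
    by (rule ftmap_contract_first[OF L K z, symmetric])
  finally show ?thesis .
qed

end

section \<open>The star structure\<close>

text \<open>If \<open>\<beta> S \<beta> = S\<close> on \<open>V \<otimes> V\<close>, then \<open>\<sigma>\<^sub>2 S \<sigma>\<^sub>2 = S\<close> on \<open>V\<^sup>\<otimes>\<^sup>4\<close>: on a word \<open>a\<^sub>1 a\<^sub>2 a\<^sub>3 a\<^sub>4\<close>
  the reversal exchanges the outer letters and applies \<open>S\<close> to the middle pair, where
  \<open>\<beta> S \<beta>\<close> acts.\<close>
lemma star_rev_braid_middle:
  assumes b: "lin_map 2 2 b" and a: "antilin st"
    and bSb: "\<And>y. y \<in> Tn 2 \<Longrightarrow> b (star_rev st (b y)) = star_rev st y" and z: "z \<in> Tn 4"
  shows "on23_4 b (star_rev st (on23_4 b z)) = star_rev st z"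
proof (rule Tn_ext[OF scalar_twist_cnj z _ semilin_star_rev[OF a]])
  have hb: "lin_on (Tn 2) b" by (rule lin_map_lin[OF b])
  show "semilin_on 4 cnj (\<lambda>z. on23_4 b (star_rev st (on23_4 b z)))"
    unfolding semilin_on_def by (simp add: tmap_lin lin_on_tmap hb lin_on_id star_rev_lin[OF a])
  fix w :: "'a list" assume "length w = 4"
  then obtain a1 a2 a3 a4 where w: "w = [a1, a2, a3, a4]" using length_4_cases by blast
  define Q where "Q = b (tw [a2, a3])"
  have Q: "Q \<in> Tn 2" unfolding Q_def by (rule lin_map_into[OF b Tn_tw]) simp
  have SQ: "star_rev st Q \<in> Tn 2" by (rule star_rev_Tn[OF a Q])
  have t1: "tw [a1] \<in> Tn 1" and t4: "tw [a4] \<in> Tn 1" and t1': "tw [st a1] \<in> Tn 1"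
    and t4': "tw [st a4] \<in> Tn 1" by (simp_all add: Tn_tw)
  have Q4: "tmul Q (tw [a4]) \<in> Tn (2 + 1)" by (rule tmul_Tn[OF Q t4])
  have SQ1: "tmul (star_rev st Q) (tw [st a1]) \<in> Tn 3"
    using tmul_Tn[OF SQ t1'] by (simp add: numeral_eq_Suc)
  have "on23_4 b (tw w) = tmul (tw [a1]) (tmul Q (tw [a4]))"
    by (simp add: w Q_def tmap_tw hb lin_on_id lin_on_tmap)
  then have "star_rev st (on23_4 b (tw w)) = tmul (tw [st a4]) (tmul (star_rev st Q) (tw [st a1]))"
    by (simp add: star_rev_tmul[OF a t1 Q4] star_rev_tmul[OF a Q t4] star_rev_tw[OF a] tmul_assoc)
  then have "on23_4 b (star_rev st (on23_4 b (tw w)))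
      = on23_4 b (tmul (tw [st a4]) (tmul (star_rev st Q) (tw [st a1])))"
    by (simp only:)
  also have "\<dots> = tmul (tw [st a4]) (tmul (b (star_rev st Q)) (tw [st a1]))"
    by (simp only: tmap_tmul[OF lin_on_id lin_on_tmap[OF hb lin_on_id] t4' SQ1]
        tmap_tmul[OF hb lin_on_id SQ t1'] id_apply)
  also have "b (star_rev st Q) = tw [st a3, st a2]"
    unfolding Q_def by (simp add: bSb Tn_tw star_rev_tw[OF a])
  also have "tmul (tw [st a4]) (tmul (tw [st a3, st a2]) (tw [st a1])) = star_rev st (tw w)"
    by (simp add: tmul_tw star_rev_tw[OF a] w)
  finally show "on23_4 b (star_rev st (on23_4 b (tw w))) = star_rev st (tw w)" .
qed

lemma ftmap_star_rev:
  assumes a: "antilin st" and K: "lin_on (Tn 2) K" and L: "lin_on (Tn 2) L"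
    and hK: "hermitian st K" and hL: "hermitian st L" and z: "z \<in> Tn 4"
  shows "ftmap 2 2 L K (star_rev st z) = cnj (ftmap 2 2 K L z)"
proof (rule Tn_ext[where \<sigma>=cnj, OF scalar_twist_cnj z])
  show "semilin_on 4 cnj (\<lambda>z. ftmap 2 2 L K (star_rev st z))"
    unfolding semilin_on_def by (simp add: star_rev_lin[OF a] ftmap_lin[OF L K])
  show "semilin_on 4 cnj (\<lambda>z. cnj (ftmap 2 2 K L z))"
    unfolding semilin_on_def by (simp add: ftmap_lin[OF K L])
  fix w :: "'a list" assume "length w = 4"
  then obtain a1 a2 a3 a4 where w: "w = [a1, a2, a3, a4]" using length_4_cases by blast
  show "ftmap 2 2 L K (star_rev st (tw w)) = cnj (ftmap 2 2 K L (tw w))"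
    using hK hL unfolding hermitian_def by (simp add: w star_rev_tw[OF a] ftmap_tw K L mult.commute)
qed

lemma braided_star_coalgebra_maps:
  assumes "braided_star_coalgebra D e b st"
  shows "antilin st" and "lin_map 2 2 b" and "lin_map 1 2 D"
  using assms unfolding braided_star_coalgebra_def braided_coalgebra_def braiding_def
    antilin_def lin_map_def bij_betw_def by auto

lemma comult_star:
  assumes "braided_star_coalgebra D e b st"
  shows "D (tw [st c]) = b (star_rev st (D (tw [c])))"
proof -
  have "D (tw [c]) \<in> Tn 2"
    by (rule lin_map_into[OF braided_star_coalgebra_maps(3)[OF assms] Tn_tw]) simp
  then show ?thesis
    using assms sflip_eq_star_rev[OF braided_star_coalgebra_maps(1)[OF assms]]
    unfolding braided_star_coalgebra_def by simp
qed

text \<open>\<open>\<beta> \<circ> S \<circ> \<beta> = S\<close> on \<open>V \<otimes> V\<close>, from \<open>\<beta> \<circ> S = S \<circ> \<beta>\<^sup>-\<^sup>1\<close>.\<close>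
lemma braid_star_braid:
  assumes star: "braided_star_coalgebra D e b st" and y: "y \<in> Tn 2"
  shows "b (star_rev st (b y)) = star_rev st y"
proof -
  have bij: "bij_betw b (Tn 2) (Tn 2)" and a: "antilin st"
    and inv: "\<And>x. x \<in> Tn 2 \<Longrightarrow> b (sflip st x) = sflip st (inv_into (Tn 2) b x)"
    using star braided_star_coalgebra_maps(1)[OF star]
    unfolding braided_star_coalgebra_def braided_coalgebra_def braiding_def by auto
  have by': "b y \<in> Tn 2" using bij y by (auto simp: bij_betw_def)
  have "b (sflip st (b y)) = sflip st (inv_into (Tn 2) b (b y))" by (rule inv[OF by'])
  also have "inv_into (Tn 2) b (b y) = y" by (rule bij_betw_inv_into_left[OF bij y])
  finally show ?thesis using sflip_eq_star_rev[OF a by'] sflip_eq_star_rev[OF a y] by simp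
qed


section \<open>Hermiticity of the convolution\<close>

lemma conv_tw:
  assumes D: "lin_map 1 2 D"
  shows "conv b D K L (tw [x, y]) = ftmap 2 2 K L (on23_4 b (tmul (D (tw [x])) (D (tw [y]))))"
proof -
  have "tmap 1 1 D D (tw [x, y]) = tmul (D (tw [x])) (D (tw [y]))"
    using tmap_tw[OF lin_map_lin[OF D] lin_map_lin[OF D], of "[x, y]"] by simp
  then show ?thesis by (simp only: conv_def Lam_def comp_apply)
qed

text \<open>The computation in the overview, for \<open>X = \<Delta> x\<close> and \<open>Y = \<Delta> y\<close>, assuming the swap
  identity \<open>(K \<otimes> L) \<sigma>\<^sub>2 \<sigma>\<^sub>1 \<sigma>\<^sub>3 \<sigma>\<^sub>2 = L \<otimes> K\<close> provided by either invariance hypothesis.\<close>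
lemma hermitian_convolution_step:
  assumes b: "lin_map 2 2 b" and a: "antilin st"
    and bSb: "\<And>y. y \<in> Tn 2 \<Longrightarrow> b (star_rev st (b y)) = star_rev st y"
    and K: "lin_on (Tn 2) K" and L: "lin_on (Tn 2) L"
    and hK: "hermitian st K" and hL: "hermitian st L"
    and swap: "\<And>z. z \<in> Tn 4 \<Longrightarrow>
      ftmap 2 2 K L (on23_4 b (on12_4 b (on34_4 b (on23_4 b z)))) = ftmap 2 2 L K z"
    and X: "X \<in> Tn 2" and Y: "Y \<in> Tn 2"
  shows "ftmap 2 2 K L (on23_4 b (tmul (b (star_rev st X)) (b (star_rev st Y))))
       = cnj (ftmap 2 2 K L (on23_4 b (tmul Y X)))"
proof -
  have SX: "star_rev st X \<in> Tn 2" and SY: "star_rev st Y \<in> Tn 2"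
    by (simp_all add: star_rev_Tn[OF a] X Y)
  have W0: "tmul Y X \<in> Tn 4" using tmul_Tn[OF Y X] by simp
  have W: "on23_4 b (tmul Y X) \<in> Tn 4"
    by (rule lin_map_into[OF last3_lin_map[OF on12_lin_map[OF b refl]] W0]) simp
  have "tmul (b (star_rev st X)) (b (star_rev st Y))
      = on12_4 b (on34_4 b (tmul (star_rev st X) (star_rev st Y)))"
    by (simp only: tmap_tmul[OF lin_on_id lin_map_lin[OF b] SX SY]
        tmap_tmul[OF lin_map_lin[OF b] lin_on_id SX lin_map_into[OF b SY]] id_apply)
  also have "tmul (star_rev st X) (star_rev st Y) = star_rev st (tmul Y X)"
    by (rule star_rev_tmul[OF a Y X, symmetric])
  also have "\<dots> = on23_4 b (star_rev st (on23_4 b (tmul Y X)))"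
    by (rule star_rev_braid_middle[OF b a bSb W0, symmetric])
  finally have "ftmap 2 2 K L (on23_4 b (tmul (b (star_rev st X)) (b (star_rev st Y))))
      = ftmap 2 2 K L (on23_4 b (on12_4 b (on34_4 b (on23_4 b (star_rev st (on23_4 b (tmul Y X)))))))"
    by (simp only:)
  also have "\<dots> = ftmap 2 2 L K (star_rev st (on23_4 b (tmul Y X)))"
    by (rule swap[OF star_rev_Tn[OF a W]])
  also have "\<dots> = cnj (ftmap 2 2 K L (on23_4 b (tmul Y X)))"
    by (rule ftmap_star_rev[OF a K L hK hL W])
  finally show ?thesis .
qed

theorem mainTheorem1:
  fixes D :: "'c::complex_vector tens \<Rightarrow> 'c tens" and e :: "'c tens \<Rightarrow> complex"
    and b :: "'c tens \<Rightarrow> 'c tens" and st :: "'c \<Rightarrow> 'c"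
    and K L :: "'c tens \<Rightarrow> complex"
  assumes "braided_star_coalgebra D e b st"
    and "lin_on (Tn 2) K" and "lin_on (Tn 2) L"
    and "hermitian st K" and "hermitian st L"
    and "beta_inv b 2 0 (scal K) \<or> beta_inv_inv b 2 0 (scal L)"
  shows "hermitian st (conv b D K L)"
proof -
  note star = assms(1) and K = assms(2) and L = assms(3)
  note maps = braided_star_coalgebra_maps[OF star]
  have swap: "ftmap 2 2 K L (on23_4 b (on12_4 b (on34_4 b (on23_4 b z)))) = ftmap 2 2 L K z"
    if "z \<in> Tn 4" for z
    using assms(6) braid_swap_of_beta_inv[OF maps(2) K L _ that]
      braid_swap_of_beta_inv_inv[OF maps(2) K L _ that] by blast
  have DTn: "D (tw [c]) \<in> Tn 2" for c by (rule lin_map_into[OF maps(3) Tn_tw]) simp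
  show ?thesis unfolding hermitian_def
  proof (intro allI)
    fix x y :: 'c
    show "conv b D K L (tw [st x, st y]) = cnj (conv b D K L (tw [y, x]))"
      unfolding conv_tw[OF maps(3)] comult_star[OF star]
      by (rule hermitian_convolution_step[OF maps(2,1) braid_star_braid[OF star] K L assms(4,5) swap DTn DTn])
  qed
qed

end
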